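(* Let $\eta,\epsilon>0$ and let $\mu$ be a distribution over $\{-1,+1\}^n$ satisfying $$\mu^{\min}_{-1}:=\min_{v\in[n]}\min_{\sigma\in\Omega(\mu_{[n]\setminus\{v\}})}\mu_v^\sigma(-1)>0.$$ Let $k_0=10(1+\epsilon)/\mu^{\min}_{-1}$. If $\mu$ has $(\eta,\epsilon)$-complete limited correlation, then for every integer $k\ge k_0$, the $k$-transformation $\mu_k=\mathrm{Rd}(\mu,k)$ is $(2\eta+3,\epsilon)$-completely spectrally independent.
   Context: For a distribution $\nu$ on $\{-1,+1\}^N$ ($N$ finite index set): $\Omega(\nu)$ support, $\nu_\Lambda$ marginal, $\nu^\sigma$ conditional given $\sigma\in\Omega(\nu_\Lambda)$, $\nu^{\sigma\wedge i\gets x}$ further conditioned on coordinate $i$ equal $x$, $\nu^{i\gets x}$ conditioned only on coordinate $i$. $(\boldsymbol\lambda*\nu)(\sigma)\propto\nu(\sigma)\prod_{i:\sigma_i=+1}\lambda_i$. Spectral independence: $\nu$ is $\eta$-spectrally independent if for all $\Lambda$, $\sigma\in\Omega(\nu_\Lambda)$ the spectral radius of $\Psi_{\nu^\sigma}(i,j)=\max_{x,y\in\Omega(\nu^\sigma_i)}d_{\mathrm{TV}}(\nu_j^{\sigma\wedge i\gets x},\nu_j^{\sigma\wedge i\gets y})$ is $\le\eta$; $(\eta,\epsilon)$-completely spectrally independent if this holds for $(\boldsymbol\lambda*\nu)$ for all $\boldsymbol\lambda\in(0,1+\epsilon]^N$. Correlation: $\Psi^{\mathrm{Cor}}_\nu(i,i)=\nu_i(-1)$;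 for $i\ne j$, $\Psi^{\mathrm{Cor}}_\nu(i,j)=\nu_j^{i\gets+1}(+1)-\nu_j(+1)$ if $+1\in\Omega(\nu_i)$, else $0$; $\Psi^{\mathrm{AbsCor}}_\nu=|\Psi^{\mathrm{Cor}}_\nu|$ entrywise. $\nu$ has $\eta$-limited correlation if the spectral radius of $\Psi^{\mathrm{AbsCor}}_{\nu^\sigma}$ is $\le\eta$ for all $\Lambda,\sigma\in\Omega(\nu_\Lambda)$; $(\eta,\epsilon)$-complete limited correlation if $(\boldsymbol\lambda*\nu)$ has $\eta$-limited correlation for all $\boldsymbol\lambda\in(0,1+\epsilon]^N$. $k$-transformation: $\mathrm{Rd}(\mu,k)$ is the law of $Y\in\{-1,+1\}^{[n]\times[k]}$ from $X\sim\mu$: if $X_i=-1$, $Y_{(i,j)}=-1$ for all $j$; if $X_i=+1$, $Y_{(i,j^* )}=+1$ and others $-1$, with $j^*$ uniform in $[k]$ independently. *)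

theory Defs
  imports Complex_Main
begin

definition cube :: "'i set \<Rightarrow> ('i \<Rightarrow> int) set" where
  "cube N = {\<sigma>. (\<forall>i\<in>N. \<sigma> i = -1 \<or> \<sigma> i = 1) \<and> (\<forall>i. i \<notin> N \<longrightarrow> \<sigma> i = 0)}"

definition is_dist :: "'i set \<Rightarrow> (('i \<Rightarrow> int) \<Rightarrow> real) \<Rightarrow> bool" where
  "is_dist N \<nu> \<longleftrightarrow> finite N \<and> (\<forall>\<sigma>. 0 \<le> \<nu> \<sigma>) \<and> (\<forall>\<sigma>. \<sigma> \<notin> cube N \<longrightarrow> \<nu> \<sigma> = 0)
      \<and> sum \<nu> (cube N) = 1"

definition restr :: "('i \<Rightarrow> int) \<Rightarrow> 'i set \<Rightarrow> ('i \<Rightarrow> int)" where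
  "restr \<sigma> \<Lambda> = (\<lambda>i. if i \<in> \<Lambda> then \<sigma> i else 0)"

definition prob :: "'i set \<Rightarrow> (('i \<Rightarrow> int) \<Rightarrow> real) \<Rightarrow> (('i \<Rightarrow> int) \<Rightarrow> bool) \<Rightarrow> real" where
  "prob N \<nu> E = (\<Sum>\<sigma>\<in>cube N. if E \<sigma> then \<nu> \<sigma> else 0)"

definition marg :: "'i set \<Rightarrow> (('i \<Rightarrow> int) \<Rightarrow> real) \<Rightarrow> 'i set \<Rightarrow> ('i \<Rightarrow> int) \<Rightarrow> real" where
  "marg N \<nu> \<Lambda> \<tau> = prob N \<nu> (\<lambda>\<sigma>. restr \<sigma> \<Lambda> = \<tau>)"

definition supp_marg :: "'i set \<Rightarrow> (('i \<Rightarrow> int) \<Rightarrow> real) \<Rightarrow> 'i set \<Rightarrow> ('i \<Rightarrow> int) set" where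
  "supp_marg N \<nu> \<Lambda> = {\<tau> \<in> cube \<Lambda>. marg N \<nu> \<Lambda> \<tau> > 0}"

definition cond :: "'i set \<Rightarrow> (('i \<Rightarrow> int) \<Rightarrow> real) \<Rightarrow> (('i \<Rightarrow> int) \<Rightarrow> bool) \<Rightarrow> (('i \<Rightarrow> int) \<Rightarrow> real)" where
  "cond N \<nu> E = (\<lambda>\<sigma>. if E \<sigma> then \<nu> \<sigma> / prob N \<nu> E else 0)"

definition pin :: "'i set \<Rightarrow> (('i \<Rightarrow> int) \<Rightarrow> real) \<Rightarrow> 'i set \<Rightarrow> ('i \<Rightarrow> int) \<Rightarrow> (('i \<Rightarrow> int) \<Rightarrow> real)" where
  "pin N \<nu> \<Lambda> \<tau> = cond N \<nu> (\<lambda>\<sigma>. restr \<sigma> \<Lambda> = \<tau>)"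

definition supp1 :: "'i set \<Rightarrow> (('i \<Rightarrow> int) \<Rightarrow> real) \<Rightarrow> 'i \<Rightarrow> int set" where
  "supp1 N \<nu> i = {x \<in> {-1, 1}. prob N \<nu> (\<lambda>\<sigma>. \<sigma> i = x) > 0}"

definition tv_coord :: "'i set \<Rightarrow> (('i \<Rightarrow> int) \<Rightarrow> real) \<Rightarrow> (('i \<Rightarrow> int) \<Rightarrow> real) \<Rightarrow> 'i \<Rightarrow> real" where
  "tv_coord N \<nu> \<rho> j = (1/2) * (\<Sum>y\<in>{-1, 1::int}. \<bar>prob N \<nu> (\<lambda>\<sigma>. \<sigma> j = y) - prob N \<rho> (\<lambda>\<sigma>. \<sigma> j = y)\<bar>)"

definition Psi :: "'i set \<Rightarrow> (('i \<Rightarrow> int) \<Rightarrow> real) \<Rightarrow> 'i \<Rightarrow> 'i \<Rightarrow> real" where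
  "Psi N \<nu> i j = Max ((\<lambda>(x, y). tv_coord N (cond N \<nu> (\<lambda>\<sigma>. \<sigma> i = x)) (cond N \<nu> (\<lambda>\<sigma>. \<sigma> i = y)) j)
                        ` (supp1 N \<nu> i \<times> supp1 N \<nu> i))"

definition spec_radius :: "'i set \<Rightarrow> ('i \<Rightarrow> 'i \<Rightarrow> real) \<Rightarrow> real" where
  "spec_radius S M = Sup (insert 0 {cmod c | c. \<exists>v :: 'i \<Rightarrow> complex. (\<exists>i\<in>S. v i \<noteq> 0) \<and>
       (\<forall>i\<in>S. (\<Sum>j\<in>S. complex_of_real (M i j) * v j) = c * v i)})"

definition spectrally_independent :: "'i set \<Rightarrow> real \<Rightarrow> (('i \<Rightarrow> int) \<Rightarrow> real) \<Rightarrow> bool" where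
  "spectrally_independent N \<eta> \<nu> \<longleftrightarrow>
     (\<forall>\<Lambda>. \<Lambda> \<subseteq> N \<longrightarrow> (\<forall>\<tau>\<in>supp_marg N \<nu> \<Lambda>. spec_radius (N - \<Lambda>) (Psi N (pin N \<nu> \<Lambda> \<tau>)) \<le> \<eta>))"

definition tilt :: "'i set \<Rightarrow> ('i \<Rightarrow> real) \<Rightarrow> (('i \<Rightarrow> int) \<Rightarrow> real) \<Rightarrow> (('i \<Rightarrow> int) \<Rightarrow> real)" where
  "tilt N lam \<nu> = (\<lambda>\<sigma>. \<nu> \<sigma> * (\<Prod>i\<in>{i\<in>N. \<sigma> i = 1}. lam i) /
       (\<Sum>\<sigma>'\<in>cube N. \<nu> \<sigma>' * (\<Prod>i\<in>{i\<in>N. \<sigma>' i = 1}. lam i)))"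

definition completely_SI :: "'i set \<Rightarrow> real \<Rightarrow> real \<Rightarrow> (('i \<Rightarrow> int) \<Rightarrow> real) \<Rightarrow> bool" where
  "completely_SI N \<eta> \<epsilon> \<nu> \<longleftrightarrow>
     (\<forall>lam. (\<forall>i\<in>N. 0 < lam i \<and> lam i \<le> 1 + \<epsilon>) \<longrightarrow> spectrally_independent N \<eta> (tilt N lam \<nu>))"

definition PsiCor :: "'i set \<Rightarrow> (('i \<Rightarrow> int) \<Rightarrow> real) \<Rightarrow> 'i \<Rightarrow> 'i \<Rightarrow> real" where
  "PsiCor N \<nu> i j =
     (if i = j then prob N \<nu> (\<lambda>\<sigma>. \<sigma> i = -1)
      else if 1 \<in> supp1 N \<nu> i
           then prob N (cond N \<nu> (\<lambda>\<sigma>. \<sigma> i = 1)) (\<lambda>\<sigma>. \<sigma> j = 1) - prob N \<nu> (\<lambda>\<sigma>. \<sigma> j = 1)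
           else 0)"

definition PsiAbsCor :: "'i set \<Rightarrow> (('i \<Rightarrow> int) \<Rightarrow> real) \<Rightarrow> 'i \<Rightarrow> 'i \<Rightarrow> real" where
  "PsiAbsCor N \<nu> i j = \<bar>PsiCor N \<nu> i j\<bar>"

definition limited_correlation :: "'i set \<Rightarrow> real \<Rightarrow> (('i \<Rightarrow> int) \<Rightarrow> real) \<Rightarrow> bool" where
  "limited_correlation N \<eta> \<nu> \<longleftrightarrow>
     (\<forall>\<Lambda>. \<Lambda> \<subseteq> N \<longrightarrow> (\<forall>\<tau>\<in>supp_marg N \<nu> \<Lambda>. spec_radius (N - \<Lambda>) (PsiAbsCor N (pin N \<nu> \<Lambda> \<tau>)) \<le> \<eta>))"

definition complete_limited_correlation :: "'i set \<Rightarrow> real \<Rightarrow> real \<Rightarrow> (('i \<Rightarrow> int) \<Rightarrow> real) \<Rightarrow> bool" where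
  "complete_limited_correlation N \<eta> \<epsilon> \<nu> \<longleftrightarrow>
     (\<forall>lam. (\<forall>i\<in>N. 0 < lam i \<and> lam i \<le> 1 + \<epsilon>) \<longrightarrow> limited_correlation N \<eta> (tilt N lam \<nu>))"

definition Rd :: "'i set \<Rightarrow> (('i \<Rightarrow> int) \<Rightarrow> real) \<Rightarrow> nat \<Rightarrow> (('i \<times> nat \<Rightarrow> int) \<Rightarrow> real)" where
  "Rd N \<mu> k = (\<lambda>Y.
     if Y \<in> cube (N \<times> {1..k}) \<and> (\<forall>i\<in>N. card {j\<in>{1..k}. Y (i, j) = 1} \<le> 1)
     then (let X = (\<lambda>i. if i \<in> N then (if \<exists>j\<in>{1..k}. Y (i, j) = 1 then 1 else -1) else 0)
           in \<mu> X * (1 / real k) ^ card {i\<in>N. X i = 1})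
     else 0)"

definition mu_min_neg :: "'i set \<Rightarrow> (('i \<Rightarrow> int) \<Rightarrow> real) \<Rightarrow> real" where
  "mu_min_neg N \<mu> = Min (\<Union>v\<in>N. (\<lambda>\<tau>. prob N (pin N \<mu> (N - {v}) \<tau>) (\<lambda>\<sigma>. \<sigma> v = -1))
                                 ` supp_marg N \<mu> (N - {v}))"

end

(*
  After tilting and pinning Rd(mu, k), every block i (the k coordinates (i, j)
  produced by coordinate i of mu) is either frozen or "free", i.e. all its pinned coordinates
  are -1.  Summing out the positions of the +1s, the free coordinates of the pinned tilted
  k-transformation are governed by a tilted and pinned copy of mu on the free blocks, whose
  block fields are sums of the fields lam(i, j) / k and hence at most 1 + epsilon; by complete
  limited correlation its absolute correlation matrix A has spectral radius at most eta.
  Since k >= 10 (1 + epsilon) / mu_min, each single coordinate carries a field at most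
  mu_min / 10, which is small against the cost mu_min of turning a block to -1.  This yields
  the entrywise bound  Psi(a, b) <= [a = b] + 10/9 pi(b) (A(i, i') + [i = i'])  for a in block i
  and b in block i', where pi(b) is the share of b in the field of its block.  Aggregating an
  eigenvector of Psi blockwise with the weights pi and applying the Collatz-Wielandt bound to
  A + 1 shows that every eigenvalue of Psi has modulus at most 1 + 10/9 (eta + 1) <= 2 eta + 3.
*)

theory Submission
  imports Defs "Jordan_Normal_Form.Spectral_Radius"
begin

section \<open>Eigenvalues of matrices indexed by a finite set\<close>

definition is_eigenvalue :: "'i set \<Rightarrow> ('i \<Rightarrow> 'i \<Rightarrow> real) \<Rightarrow> complex \<Rightarrow> bool" where
  "is_eigenvalue S M c \<longleftrightarrow> (\<exists>v :: 'i \<Rightarrow> complex. (\<exists>i\<in>S. v i \<noteq> 0) \<and>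
       (\<forall>i\<in>S. (\<Sum>j\<in>S. complex_of_real (M i j) * v j) = c * v i))"

definition index_mat :: "(nat \<Rightarrow> 'i) \<Rightarrow> nat \<Rightarrow> ('i \<Rightarrow> 'i \<Rightarrow> real) \<Rightarrow> complex mat" where
  "index_mat e n M = mat n n (\<lambda>(p, q). complex_of_real (M (e p) (e q)))"

definition matvec :: "'i set \<Rightarrow> ('i \<Rightarrow> 'i \<Rightarrow> real) \<Rightarrow> ('i \<Rightarrow> real) \<Rightarrow> ('i \<Rightarrow> real)" where
  "matvec S M w = (\<lambda>x. \<Sum>y\<in>S. M x y * w y)"

lemma index_mat_carrier [simp]: "index_mat e n M \<in> carrier_mat n n"
  and dim_index_mat [simp]: "dim_row (index_mat e n M) = n" "dim_col (index_mat e n M) = n"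
  by (simp_all add: index_mat_def)

lemma is_eigenvalue_if_eigenvalue_index_mat:
  assumes e: "bij_betw e {0..<n} S" and "eigenvalue (index_mat e n M) c"
  shows "is_eigenvalue S M c"
proof -
  let ?A = "index_mat e n M"
  obtain v where v: "v \<in> carrier_vec n" "v \<noteq> 0\<^sub>v n" "?A *\<^sub>v v = c \<cdot>\<^sub>v v"
    using assms(2) unfolding eigenvalue_def eigenvector_def by auto
  define w where "w x = v $ the_inv_into {0..<n} e x" for x
  have w_e: "w (e p) = v $ p" if "p < n" for p
    unfolding w_def using e that by (simp add: bij_betw_def the_inv_into_f_f)
  obtain p0 where p0: "p0 < n" "v $ p0 \<noteq> 0"
    using v(1,2) by (metis carrier_vecD eq_vecI index_zero_vec)
  show ?thesis unfolding is_eigenvalue_def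
  proof (intro exI conjI ballI)
    show "\<exists>i\<in>S. w i \<noteq> 0" using p0 e w_e by (metis bij_betwE atLeastLessThan_iff zero_le)
    fix x assume "x \<in> S"
    then obtain p where p: "p < n" "x = e p" using e by (auto simp: bij_betw_def image_iff)
    have "(\<Sum>y\<in>S. complex_of_real (M x y) * w y) = (?A *\<^sub>v v) $ p"
      using p v(1) sum.reindex_bij_betw[OF e, of "\<lambda>y. complex_of_real (M x y) * w y"]
      by (simp add: index_mat_def scalar_prod_def w_e)
    also have "\<dots> = c * w x" using v p w_e by simp
    finally show "(\<Sum>y\<in>S. complex_of_real (M x y) * w y) = c * w x" .
  qed
qed

lemma eigenvalue_index_mat_if_is_eigenvalue:
  assumes e: "bij_betw e {0..<n} S" and "is_eigenvalue S M c"
  shows "eigenvalue (index_mat e n M) c"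
proof -
  let ?A = "index_mat e n M"
  obtain w where nz: "\<exists>i\<in>S. w i \<noteq> 0"
    and ew: "\<forall>i\<in>S. (\<Sum>j\<in>S. complex_of_real (M i j) * w j) = c * w i"
    using assms(2) unfolding is_eigenvalue_def by blast
  define v where "v = vec n (\<lambda>p. w (e p))"
  obtain p0 where p0: "p0 < n" "w (e p0) \<noteq> 0"
    using nz e by (auto simp: bij_betw_def image_iff)
  have "?A *\<^sub>v v = c \<cdot>\<^sub>v v"
  proof (rule eq_vecI)
    fix p assume "p < dim_vec (c \<cdot>\<^sub>v v)"
    then have p: "p < n" by (simp add: v_def)
    have "e p \<in> S" using e p by (auto simp: bij_betw_def)
    moreover have "(?A *\<^sub>v v) $ p = (\<Sum>j\<in>S. complex_of_real (M (e p) j) * w j)"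
      using p sum.reindex_bij_betw[OF e, of "\<lambda>j. complex_of_real (M (e p) j) * w j"]
      by (simp add: index_mat_def scalar_prod_def v_def)
    ultimately show "(?A *\<^sub>v v) $ p = (c \<cdot>\<^sub>v v) $ p" using ew p by (simp add: v_def)
  qed (simp add: v_def)
  moreover have "v \<noteq> 0\<^sub>v n" using p0 by (metis index_vec index_zero_vec(1) v_def)
  moreover have "v \<in> carrier_vec n" by (simp add: v_def)
  ultimately show ?thesis unfolding eigenvalue_def eigenvector_def by auto
qed

lemma eigenvalue_index_mat_iff:
  assumes "bij_betw e {0..<n} S"
  shows "eigenvalue (index_mat e n M) c \<longleftrightarrow> is_eigenvalue S M c"
  using is_eigenvalue_if_eigenvalue_index_mat[OF assms] eigenvalue_index_mat_if_is_eigenvalue[OF assms]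
  by blast

lemma finite_eigenvalues:
  assumes "finite S"
  shows "finite {c. is_eigenvalue S M c}"
proof -
  obtain e where e: "bij_betw e {0..<card S} S"
    using ex_bij_betw_nat_finite[OF assms] by blast
  have "{c. is_eigenvalue S M c} = spectrum (index_mat e (card S) M)"
    unfolding spectrum_def eigenvalue_index_mat_iff[OF e] by simp
  then show ?thesis using card_finite_spectrum(1)[OF index_mat_carrier] by simp
qed

lemma bdd_above_eigenvalue_norms:
  assumes "finite S"
  shows "bdd_above (insert 0 {cmod c |c. \<exists>v. (\<exists>i\<in>S. v i \<noteq> 0) \<and>
      (\<forall>i\<in>S. (\<Sum>j\<in>S. complex_of_real (M i j) * v j) = c * v i)})"
proof -
  have "{cmod c |c. is_eigenvalue S M c} = cmod ` {c. is_eigenvalue S M c}" by auto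
  then have "finite (insert 0 {cmod c |c. is_eigenvalue S M c})"
    using finite_eigenvalues[OF assms] by simp
  then show ?thesis unfolding is_eigenvalue_def by (rule bdd_above_finite)
qed

lemma spec_radius_ge_eigenvalue:
  assumes "finite S" and "is_eigenvalue S M c"
  shows "cmod c \<le> spec_radius S M"
  unfolding spec_radius_def
  by (rule cSup_upper[OF _ bdd_above_eigenvalue_norms[OF assms(1)]])
    (use assms(2) in \<open>auto simp: is_eigenvalue_def\<close>)

lemma spec_radius_nonneg:
  assumes "finite S"
  shows "0 \<le> spec_radius S M"
  unfolding spec_radius_def by (rule cSup_upper[OF _ bdd_above_eigenvalue_norms[OF assms]]) simp

lemma spec_radius_leI:
  assumes "\<And>c. is_eigenvalue S M c \<Longrightarrow> cmod c \<le> B" and "0 \<le> B"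
  shows "spec_radius S M \<le> B"
  unfolding spec_radius_def by (rule cSup_least) (use assms in \<open>auto simp: is_eigenvalue_def\<close>)

lemma is_eigenvalue_divide:
  assumes "s \<noteq> 0" and "is_eigenvalue S (\<lambda>i j. M i j / s) c"
  shows "is_eigenvalue S M (of_real s * c)"
proof -
  obtain v where "\<exists>i\<in>S. v i \<noteq> 0"
    and v: "\<forall>i\<in>S. (\<Sum>j\<in>S. complex_of_real (M i j / s) * v j) = c * v i"
    using assms(2) unfolding is_eigenvalue_def by blast
  moreover have "(\<Sum>j\<in>S. complex_of_real (M i j) * v j) = of_real s * c * v i" if "i \<in> S" for i
  proof -
    have "(\<Sum>j\<in>S. complex_of_real (M i j) * v j)
        = of_real s * (\<Sum>j\<in>S. complex_of_real (M i j / s) * v j)"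
      using assms(1) by (simp add: sum_distrib_left)
    then show ?thesis using v that by simp
  qed
  ultimately show ?thesis unfolding is_eigenvalue_def by blast
qed

lemma is_eigenvalue_add_id:
  assumes "finite S" and "is_eigenvalue S (\<lambda>i j. M i j + of_bool (i = j)) c"
  shows "is_eigenvalue S M (c - 1)"
proof -
  obtain v where "\<exists>i\<in>S. v i \<noteq> 0"
    and v: "\<forall>i\<in>S. (\<Sum>j\<in>S. complex_of_real (M i j + of_bool (i = j)) * v j) = c * v i"
    using assms(2) unfolding is_eigenvalue_def by blast
  moreover have "(\<Sum>j\<in>S. complex_of_real (M i j) * v j) = (c - 1) * v i" if i: "i \<in> S" for i
  proof -
    have "c * v i = (\<Sum>j\<in>S. complex_of_real (M i j + of_bool (i = j)) * v j)"
      using bspec[OF v i] by simp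
    also have "\<dots> = (\<Sum>j\<in>S. complex_of_real (M i j) * v j) + v i"
      using assms(1) i by (simp add: distrib_right sum.distrib sum.remove[of S i] sum.neutral)
    finally show ?thesis by (simp add: algebra_simps)
  qed
  ultimately show ?thesis unfolding is_eigenvalue_def by blast
qed

lemma spec_radius_add_id_le:
  assumes "finite S"
  shows "spec_radius S (\<lambda>i j. M i j + of_bool (i = j)) \<le> spec_radius S M + 1"
proof (rule spec_radius_leI)
  show "0 \<le> spec_radius S M + 1" using spec_radius_nonneg[OF assms] by simp
  fix c assume "is_eigenvalue S (\<lambda>i j. M i j + of_bool (i = j)) c"
  then have "cmod (c - 1) \<le> spec_radius S M"
    by (rule spec_radius_ge_eigenvalue[OF assms is_eigenvalue_add_id[OF assms]])
  then show "cmod c \<le> spec_radius S M + 1"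
    using norm_triangle_ineq[of "c - 1" 1] by simp
qed

lemma index_mat_pow_mult_vec:
  assumes e: "bij_betw e {0..<n} S"
  shows "(index_mat e n M ^\<^sub>m k) *\<^sub>v vec n (\<lambda>p. complex_of_real (w (e p)))
       = vec n (\<lambda>p. complex_of_real ((matvec S M ^^ k) w (e p)))"
proof (induction k arbitrary: w)
  case (Suc k)
  let ?A = "index_mat e n M"
  have "?A *\<^sub>v vec n (\<lambda>p. complex_of_real (w (e p))) = vec n (\<lambda>p. complex_of_real (matvec S M w (e p)))"
  proof (rule eq_vecI)
    fix p assume "p < dim_vec (vec n (\<lambda>p. complex_of_real (matvec S M w (e p))))"
    then have p: "p < n" by simp
    have "(?A *\<^sub>v vec n (\<lambda>p. complex_of_real (w (e p)))) $ p
        = complex_of_real (\<Sum>q\<in>{0..<n}. M (e p) (e q) * w (e q))"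
      using p by (simp add: index_mat_def scalar_prod_def)
    also have "(\<Sum>q\<in>{0..<n}. M (e p) (e q) * w (e q)) = matvec S M w (e p)"
      unfolding matvec_def by (rule sum.reindex_bij_betw[OF e])
    finally show "(?A *\<^sub>v vec n (\<lambda>p. complex_of_real (w (e p)))) $ p
        = vec n (\<lambda>p. complex_of_real (matvec S M w (e p))) $ p"
      using p by simp
  qed simp
  then have "(?A ^\<^sub>m Suc k) *\<^sub>v vec n (\<lambda>p. complex_of_real (w (e p)))
      = (?A ^\<^sub>m k) *\<^sub>v vec n (\<lambda>p. complex_of_real (matvec S M w (e p)))"
    by (simp del: pow_mat.simps add: pow_mat.simps(2) assoc_mult_mat_vec[of _ n n _ n])
  then show ?case using Suc by (simp add: funpow_Suc_right del: funpow.simps)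
qed simp

text \<open>The Jordan normal form enters only here: a matrix whose eigenvalues lie in the open unit
  disc has bounded powers.\<close>

lemma index_mat_pow_norm_bound:
  assumes e: "bij_betw e {0..<n} S" and n: "0 < n"
    and small: "\<And>c. is_eigenvalue S M c \<Longrightarrow> cmod c < 1"
  obtains cb where "\<And>k. norm_bound (index_mat e n M ^\<^sub>m k) cb"
proof -
  let ?A = "index_mat e n M"
  have "spectral_radius ?A \<in> cmod ` spectrum ?A"
    using spectral_radius_mem_max(1)[OF index_mat_carrier[of e n M] n] by simp
  then obtain \<kappa> where \<kappa>: "\<kappa> \<in> spectrum ?A" "spectral_radius ?A = cmod \<kappa>" by auto
  have "spectral_radius ?A < 1"
    using small \<kappa> eigenvalue_index_mat_iff[OF e] by (simp add: spectrum_def)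
  then show ?thesis
    using that spectral_radius_jnf_norm_bound_less_1_upper_triangular[OF index_mat_carrier] by blast
qed

lemma matvec_pow_bounded:
  assumes S: "finite S" and small: "\<And>c. is_eigenvalue S M c \<Longrightarrow> cmod c < 1"
  obtains C where "\<And>k x. x \<in> S \<Longrightarrow> \<bar>(matvec S M ^^ k) u x\<bar> \<le> C"
proof (cases "S = {}")
  case False
  define n where "n = card S"
  obtain e where e: "bij_betw e {0..<n} S" using ex_bij_betw_nat_finite[OF S] unfolding n_def by blast
  let ?A = "index_mat e n M"
  have n: "0 < n" using False S by (simp add: n_def card_gt_0_iff)
  obtain cb where cb: "\<And>k. norm_bound (?A ^\<^sub>m k) cb"
    using index_mat_pow_norm_bound[OF e n small] by blast
  have "\<bar>(matvec S M ^^ k) u (e p)\<bar> \<le> cb * (\<Sum>y\<in>S. \<bar>u y\<bar>)" if p: "p < n" for k p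
  proof -
    have "complex_of_real ((matvec S M ^^ k) u (e p))
        = ((?A ^\<^sub>m k) *\<^sub>v vec n (\<lambda>p. complex_of_real (u (e p)))) $ p"
      using p by (simp add: index_mat_pow_mult_vec[OF e])
    also have "\<dots> = (\<Sum>q\<in>{0..<n}. (?A ^\<^sub>m k) $$ (p, q) * complex_of_real (u (e q)))"
      using p pow_carrier_mat[OF index_mat_carrier[of e n M], of k] by (simp add: scalar_prod_def)
    finally have "\<bar>(matvec S M ^^ k) u (e p)\<bar>
        \<le> (\<Sum>q\<in>{0..<n}. cmod ((?A ^\<^sub>m k) $$ (p, q)) * \<bar>u (e q)\<bar>)"
      by (metis (no_types, lifting) norm_mult norm_of_real norm_sum sum.cong)
    also have "\<dots> \<le> (\<Sum>q\<in>{0..<n}. cb * \<bar>u (e q)\<bar>)"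
      using cb[of k] p by (intro sum_mono mult_right_mono) (auto simp: norm_bound_def)
    also have "\<dots> = cb * (\<Sum>y\<in>S. \<bar>u y\<bar>)"
      unfolding sum_distrib_left[symmetric] using sum.reindex_bij_betw[OF e, of "\<lambda>y. \<bar>u y\<bar>"] by simp
    finally show ?thesis .
  qed
  then show ?thesis using that e by (fastforce simp: bij_betw_def)
qed (use that in auto)

lemma matvec_pow_ge:
  assumes M: "\<And>i j. i \<in> S \<Longrightarrow> j \<in> S \<Longrightarrow> M i j \<ge> 0" and r: "r \<ge> 0"
    and u: "\<And>i. i \<in> S \<Longrightarrow> u i \<ge> 0" and ru: "\<And>i. i \<in> S \<Longrightarrow> r * u i \<le> matvec S M u i"
    and x: "x \<in> S"
  shows "r ^ k * u x \<le> (matvec S M ^^ k) u x"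
  using x
proof (induction k arbitrary: x)
  case (Suc k)
  have "r ^ Suc k * u x = r ^ k * (r * u x)" by simp
  also have "\<dots> \<le> r ^ k * matvec S M u x" using ru[OF Suc.prems] r by (simp add: mult_left_mono)
  also have "\<dots> = (\<Sum>y\<in>S. M x y * (r ^ k * u y))"
    by (simp add: matvec_def sum_distrib_left algebra_simps)
  also have "\<dots> \<le> (\<Sum>y\<in>S. M x y * (matvec S M ^^ k) u y)"
    using Suc.IH M Suc.prems by (intro sum_mono mult_left_mono) auto
  also have "\<dots> = matvec S M ((matvec S M ^^ k) u) x" by (simp add: matvec_def)
  finally show ?case by simp
qed simp

text \<open>If all eigenvalues of \<open>M\<close> had modulus below some \<open>s < r\<close>, the powers of \<open>M / s\<close> would
  stay bounded, whereas \<open>r u \<le> M u\<close> forces \<open>(M / s)^k u \<ge> (r / s)^k u\<close>.\<close>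

lemma collatz_wielandt_lower:
  assumes S: "finite S" and M: "\<And>i j. i \<in> S \<Longrightarrow> j \<in> S \<Longrightarrow> M i j \<ge> 0"
    and u: "\<And>i. i \<in> S \<Longrightarrow> u i \<ge> 0" and x0: "x0 \<in> S" "u x0 > 0"
    and ru: "\<And>i. i \<in> S \<Longrightarrow> r * u i \<le> matvec S M u i" and r: "r > 0"
  shows "\<exists>c. is_eigenvalue S M c \<and> r \<le> cmod c"
proof (rule ccontr)
  assume no: "\<not> ?thesis"
  have lt: "cmod c < r" if "is_eigenvalue S M c" for c using no that not_le by blast
  define E where "E = insert 0 (cmod ` {c. is_eigenvalue S M c})"
  have fin: "finite E" using finite_eigenvalues[OF S] by (simp add: E_def)
  define \<rho> where "\<rho> = Max E"
  have \<rho>: "0 \<le> \<rho>" unfolding \<rho>_def by (rule Max_ge[OF fin]) (simp add: E_def)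
  have "\<rho> < r" unfolding \<rho>_def using fin r lt by (subst Max_less_iff) (auto simp: E_def)
  have le_\<rho>: "cmod c \<le> \<rho>" if "is_eigenvalue S M c" for c
    unfolding \<rho>_def by (rule Max_ge[OF fin]) (use that in \<open>simp add: E_def\<close>)
  define s where "s = (\<rho> + r) / 2"
  have s: "0 < s" "s < r" "\<rho> < s" using \<rho> \<open>\<rho> < r\<close> unfolding s_def by auto
  have small: "cmod \<kappa> < 1" if "is_eigenvalue S (\<lambda>i j. M i j / s) \<kappa>" for \<kappa>
  proof -
    have "s * cmod \<kappa> \<le> \<rho>"
      using le_\<rho>[OF is_eigenvalue_divide[OF _ that]] s by (simp add: norm_mult)
    then have "s * cmod \<kappa> < s * 1" using s(3) by simp
    then show ?thesis using s(1) by (simp only: mult_less_cancel_left_pos)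
  qed
  obtain C where C: "\<And>k x. x \<in> S \<Longrightarrow> \<bar>(matvec S (\<lambda>i j. M i j / s) ^^ k) u x\<bar> \<le> C"
    using matvec_pow_bounded[OF S small, where u = u] by metis
  have "r / s * u i \<le> matvec S (\<lambda>i j. M i j / s) u i" if "i \<in> S" for i
  proof -
    have "r / s * u i \<le> matvec S M u i / s"
      using divide_right_mono[OF ru[OF that], of s] s by simp
    also have "\<dots> = matvec S (\<lambda>i j. M i j / s) u i"
      by (simp add: matvec_def sum_divide_distrib)
    finally show ?thesis .
  qed
  then have grow: "(r / s) ^ k * u x0 \<le> (matvec S (\<lambda>i j. M i j / s) ^^ k) u x0" for k
    using M u s r x0 by (intro matvec_pow_ge) auto
  obtain k where "C / u x0 < (r / s) ^ k"
    using real_arch_pow[of "r / s" "C / u x0"] s by auto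
  then have "C < (r / s) ^ k * u x0" using x0 by (simp add: divide_less_eq)
  then show False using grow[of k] C[OF x0(1), of k] by linarith
qed

lemma eigenvector_abs_le:
  assumes S: "finite S" and a: "a \<in> S"
    and ev: "(\<Sum>b\<in>S. complex_of_real (P a b) * v b) = c * v a"
    and Q: "\<And>b. b \<in> S \<Longrightarrow> \<bar>P a b\<bar> \<le> Q b"
  shows "cmod c * cmod (v a) \<le> (\<Sum>b\<in>S. Q b * cmod (v b))"
proof -
  have "cmod c * cmod (v a) = cmod (\<Sum>b\<in>S. complex_of_real (P a b) * v b)"
    using ev by (simp add: norm_mult)
  also have "\<dots> \<le> (\<Sum>b\<in>S. \<bar>P a b\<bar> * cmod (v b))"
    by (rule order.trans[OF norm_sum]) (simp add: norm_mult)
  also have "\<dots> \<le> (\<Sum>b\<in>S. Q b * cmod (v b))"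
    using Q by (intro sum_mono mult_right_mono) auto
  finally show ?thesis .
qed

lemma sum_of_bool_eq_mult:
  fixes f :: "'a \<Rightarrow> 'b::comm_semiring_1"
  assumes "finite S" and "a \<in> S"
  shows "(\<Sum>b\<in>S. of_bool (a = b) * f b) = f a"
  using assms by (simp add: sum.remove[of S a] sum.neutral)

lemma sum_block_dominated_eq_matvec:
  assumes S: "finite S" and D: "finite D" and i: "i \<in> D"
  shows "(\<Sum>b\<in>S. (if blk b \<in> D then \<pi> b * B i (blk b) else 0) * w b)
       = matvec D B (\<lambda>i'. \<Sum>b\<in>{b\<in>S. blk b = i'}. \<pi> b * w b) i"
proof -
  have "(\<Sum>b\<in>S. (if blk b \<in> D then \<pi> b * B i (blk b) else 0) * w b)
      = (\<Sum>b\<in>S. if blk b \<in> D then B i (blk b) * (\<pi> b * w b) else 0)"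
    by (intro sum.cong) auto
  also have "\<dots> = (\<Sum>b\<in>{b\<in>S. blk b \<in> D}. B i (blk b) * (\<pi> b * w b))"
    by (rule sum.inter_filter[OF S, symmetric])
  also have "\<dots> = (\<Sum>i'\<in>D. \<Sum>b\<in>{b\<in>{b\<in>S. blk b \<in> D}. blk b = i'}. B i (blk b) * (\<pi> b * w b))"
    by (rule sum.group[symmetric]) (use S D in auto)
  also have "\<dots> = matvec D B (\<lambda>i'. \<Sum>b\<in>{b\<in>S. blk b = i'}. \<pi> b * w b) i"
    unfolding matvec_def sum_distrib_left by (intro sum.cong refl) auto
  finally show ?thesis .
qed

lemma weighted_mean_le:
  fixes f :: "'a \<Rightarrow> real"
  assumes "\<And>b. b \<in> T \<Longrightarrow> 0 \<le> \<pi> b" and "(\<Sum>b\<in>T. \<pi> b) = 1" and "\<And>b. b \<in> T \<Longrightarrow> f b \<le> K"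
  shows "(\<Sum>b\<in>T. \<pi> b * f b) \<le> K"
proof -
  have "(\<Sum>b\<in>T. \<pi> b * f b) \<le> (\<Sum>b\<in>T. \<pi> b * K)"
    using assms(1,3) by (intro sum_mono mult_left_mono) auto
  also have "\<dots> = K" using assms(2) by (simp flip: sum_distrib_right)
  finally show ?thesis .
qed

lemma block_dominated_row_le:
  assumes S: "finite S" and D: "finite D" and a: "a \<in> S"
    and ev: "(\<Sum>b\<in>S. complex_of_real (P a b) * v b) = c * v a"
    and P: "\<And>b. b \<in> S \<Longrightarrow> \<bar>P a b\<bar> \<le> of_bool (a = b)
              + C * (if blk a \<in> D \<and> blk b \<in> D then \<pi> b * B (blk a) (blk b) else 0)"
  shows "cmod c * cmod (v a) \<le> cmod (v a)
      + C * (if blk a \<in> D then matvec D B (\<lambda>i. \<Sum>b\<in>{b\<in>S. blk b = i}. \<pi> b * cmod (v b)) (blk a) else 0)"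
proof -
  have "cmod c * cmod (v a) \<le> (\<Sum>b\<in>S. (of_bool (a = b)
      + C * (if blk a \<in> D \<and> blk b \<in> D then \<pi> b * B (blk a) (blk b) else 0)) * cmod (v b))"
    by (rule eigenvector_abs_le[where P = P, OF S a ev P])
  also have "\<dots> = cmod (v a)
      + C * (\<Sum>b\<in>S. (if blk a \<in> D \<and> blk b \<in> D then \<pi> b * B (blk a) (blk b) else 0) * cmod (v b))"
    using S a by (simp only: distrib_right sum.distrib sum_distrib_left mult.assoc sum_of_bool_eq_mult)
  finally show ?thesis
    using sum_block_dominated_eq_matvec[OF S D, of "blk a" blk \<pi> B "\<lambda>b. cmod (v b)"]
    by (cases "blk a \<in> D") simp_all
qed

text \<open>Aggregating a nonnegative vector \<open>w\<close> blockwise with the weights \<open>\<pi>\<close> turns the row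
  inequalities into a subinvariance \<open>r u \<le> B u\<close>, to which Collatz--Wielandt applies.\<close>

lemma spec_radius_ge_block_aggregate:
  fixes B :: "'b \<Rightarrow> 'b \<Rightarrow> real" and blk :: "'a \<Rightarrow> 'b"
  assumes S: "finite S" and D: "finite D" and C: "C > 0" and x: "1 < x"
    and B: "\<And>i i'. i \<in> D \<Longrightarrow> i' \<in> D \<Longrightarrow> 0 \<le> B i i'"
    and \<pi>_nonneg: "\<And>b. b \<in> S \<Longrightarrow> 0 \<le> \<pi> b"
    and \<pi>_pos: "\<And>b. b \<in> S \<Longrightarrow> blk b \<in> D \<Longrightarrow> 0 < \<pi> b"
    and \<pi>_sum: "\<And>i. i \<in> D \<Longrightarrow> (\<Sum>b\<in>{b\<in>S. blk b = i}. \<pi> b) = 1"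
    and w: "\<And>b. 0 \<le> w b" and a0: "a0 \<in> S" "0 < w a0"
    and row: "\<And>a. a \<in> S \<Longrightarrow> x * w a \<le> w a
      + C * (if blk a \<in> D then matvec D B (\<lambda>i. \<Sum>b\<in>{b\<in>S. blk b = i}. \<pi> b * w b) (blk a) else 0)"
  shows "x \<le> 1 + C * spec_radius D B"
proof -
  define u where "u i = (\<Sum>b\<in>{b\<in>S. blk b = i}. \<pi> b * w b)" for i
  have a0D: "blk a0 \<in> D"
  proof (rule ccontr)
    assume "blk a0 \<notin> D"
    then have "(x - 1) * w a0 \<le> 0" using row[OF a0(1)] by (simp add: algebra_simps)
    then show False using x a0(2) by (simp add: mult_le_0_iff)
  qed
  have "0 < \<pi> a0 * w a0" using \<pi>_pos[OF a0(1) a0D] a0(2) by simp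
  also have "\<dots> \<le> u (blk a0)" unfolding u_def
    using a0(1) \<pi>_nonneg w S by (intro member_le_sum) auto
  finally have u_pos: "0 < u (blk a0)" .
  define r where "r = (x - 1) / C"
  have r: "0 < r" using x C unfolding r_def by simp
  have ru: "r * u i \<le> matvec D B u i" if i: "i \<in> D" for i
  proof -
    have "(x - 1) * u i = (\<Sum>b\<in>{b\<in>S. blk b = i}. \<pi> b * ((x - 1) * w b))"
      unfolding u_def sum_distrib_left by (simp add: mult_ac)
    also have "\<dots> \<le> C * matvec D B u i"
    proof (rule weighted_mean_le)
      fix b assume "b \<in> {b\<in>S. blk b = i}"
      then show "(x - 1) * w b \<le> C * matvec D B u i"
        using row[of b] i unfolding u_def[abs_def] by (simp add: algebra_simps)
    qed (use \<pi>_nonneg \<pi>_sum[OF i] in auto)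
    finally show ?thesis using C unfolding r_def by (simp add: field_simps)
  qed
  have u0: "0 \<le> u i" for i unfolding u_def using \<pi>_nonneg w by (auto intro!: sum_nonneg)
  obtain l where "is_eigenvalue D B l" "r \<le> cmod l"
    using collatz_wielandt_lower[OF D B _ a0D u_pos ru r] u0 by blast
  then have "r \<le> spec_radius D B" using spec_radius_ge_eigenvalue[OF D] by fastforce
  then show ?thesis using C unfolding r_def by (simp add: field_simps)
qed

lemma spec_radius_le_block_dominated:
  fixes P :: "'a \<Rightarrow> 'a \<Rightarrow> real" and B :: "'b \<Rightarrow> 'b \<Rightarrow> real" and blk :: "'a \<Rightarrow> 'b"
  assumes S: "finite S" and D: "finite D" and C: "C > 0"
    and B: "\<And>i i'. i \<in> D \<Longrightarrow> i' \<in> D \<Longrightarrow> 0 \<le> B i i'"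
    and \<pi>_nonneg: "\<And>b. b \<in> S \<Longrightarrow> 0 \<le> \<pi> b"
    and \<pi>_pos: "\<And>b. b \<in> S \<Longrightarrow> blk b \<in> D \<Longrightarrow> 0 < \<pi> b"
    and \<pi>_sum: "\<And>i. i \<in> D \<Longrightarrow> (\<Sum>b\<in>{b\<in>S. blk b = i}. \<pi> b) = 1"
    and P: "\<And>a b. a \<in> S \<Longrightarrow> b \<in> S \<Longrightarrow> \<bar>P a b\<bar> \<le> of_bool (a = b)
              + C * (if blk a \<in> D \<and> blk b \<in> D then \<pi> b * B (blk a) (blk b) else 0)"
  shows "spec_radius S P \<le> 1 + C * spec_radius D B"
proof (rule spec_radius_leI)
  have \<rho>: "0 \<le> spec_radius D B" by (rule spec_radius_nonneg[OF D])
  then show "0 \<le> 1 + C * spec_radius D B" using C by simp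
  fix c assume "is_eigenvalue S P c"
  then obtain v where nz: "\<exists>a\<in>S. v a \<noteq> 0"
    and ev: "\<forall>a\<in>S. (\<Sum>b\<in>S. complex_of_real (P a b) * v b) = c * v a"
    unfolding is_eigenvalue_def by blast
  have row: "cmod c * cmod (v a) \<le> cmod (v a) + C * (if blk a \<in> D
      then matvec D B (\<lambda>i. \<Sum>b\<in>{b\<in>S. blk b = i}. \<pi> b * cmod (v b)) (blk a) else 0)" if "a \<in> S" for a
    by (rule block_dominated_row_le[where P = P and blk = blk and \<pi> = \<pi> and B = B and C = C,
        OF S D that bspec[OF ev that] P[OF that]])
  show "cmod c \<le> 1 + C * spec_radius D B"
  proof (cases "cmod c \<le> 1")
    case True
    then show ?thesis using \<rho> C by (simp add: add_increasing2)
  next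
    case False
    obtain a0 where "a0 \<in> S" "v a0 \<noteq> 0" using nz by blast
    then show ?thesis
      using spec_radius_ge_block_aggregate[OF S D C _ B \<pi>_nonneg \<pi>_pos \<pi>_sum _ _ _ row] False
      by force
  qed
qed

section \<open>Configurations, partial configurations and weights\<close>

lemma finite_cube:
  assumes "finite N"
  shows "finite (cube N)"
proof -
  have "cube N \<subseteq> (\<lambda>f i. if i \<in> N then f i else 0) ` (PiE N (\<lambda>_. {-1, 1}))"
  proof
    fix \<sigma> assume s: "\<sigma> \<in> cube N"
    have "\<sigma> = (\<lambda>i. if i \<in> N then restrict \<sigma> N i else 0)" using s by (auto simp: cube_def)
    moreover have "restrict \<sigma> N \<in> PiE N (\<lambda>_. {-1, 1})" using s by (auto simp: cube_def)
    ultimately show "\<sigma> \<in> (\<lambda>f i. if i \<in> N then f i else 0) ` (PiE N (\<lambda>_. {-1, 1}))" by blast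
  qed
  moreover have "finite (PiE N (\<lambda>_. {-1::int, 1}))" using assms by (intro finite_PiE) auto
  ultimately show ?thesis using finite_subset by blast
qed

lemma cube_value: "\<sigma> \<in> cube N \<Longrightarrow> i \<in> N \<Longrightarrow> \<sigma> i = -1 \<or> \<sigma> i = 1"
  and cube_outside: "\<sigma> \<in> cube N \<Longrightarrow> i \<notin> N \<Longrightarrow> \<sigma> i = 0"
  by (auto simp: cube_def)

text \<open>A partial configuration is a function into \<open>{-1, 0, 1}\<close>, the value \<open>0\<close> marking the
  coordinates left free; a pinning \<open>\<tau> \<in> cube \<Lambda>\<close> is the partial configuration free outside \<open>\<Lambda>\<close>.\<close>

definition agrees_with :: "'i set \<Rightarrow> ('i \<Rightarrow> int) \<Rightarrow> ('i \<Rightarrow> int) \<Rightarrow> bool" where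
  "agrees_with N w \<sigma> \<longleftrightarrow> (\<forall>l\<in>N. w l \<noteq> 0 \<longrightarrow> \<sigma> l = w l)"

lemma restr_eq_iff_agrees_with:
  assumes t: "\<tau> \<in> cube \<Lambda>" and L: "\<Lambda> \<subseteq> N"
  shows "restr \<sigma> \<Lambda> = \<tau> \<longleftrightarrow> agrees_with N \<tau> \<sigma>"
  unfolding agrees_with_def
proof
  assume "restr \<sigma> \<Lambda> = \<tau>"
  then have r: "\<And>l. restr \<sigma> \<Lambda> l = \<tau> l" by simp
  show "\<forall>l\<in>N. \<tau> l \<noteq> 0 \<longrightarrow> \<sigma> l = \<tau> l"
  proof (intro ballI impI)
    fix l assume "\<tau> l \<noteq> 0"
    then have "l \<in> \<Lambda>" using t by (auto simp: cube_def)
    then show "\<sigma> l = \<tau> l" using r[of l] by (simp add: restr_def)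
  qed
next
  assume a: "\<forall>l\<in>N. \<tau> l \<noteq> 0 \<longrightarrow> \<sigma> l = \<tau> l"
  show "restr \<sigma> \<Lambda> = \<tau>"
  proof
    fix l show "restr \<sigma> \<Lambda> l = \<tau> l"
    proof (cases "l \<in> \<Lambda>")
      case True
      then have "\<tau> l \<noteq> 0" using t by (auto simp: cube_def)
      then show ?thesis using a True L by (auto simp: restr_def)
    next
      case False then show ?thesis using t by (auto simp: restr_def cube_def)
    qed
  qed
qed

lemma agrees_with_upd_iff:
  assumes "w a = 0" and "a \<in> N" and "x \<noteq> 0"
  shows "agrees_with N w \<sigma> \<and> \<sigma> a = x \<longleftrightarrow> agrees_with N (w(a := x)) \<sigma>"
  using assms unfolding agrees_with_def by (metis fun_upd_other fun_upd_same)

lemma restr_eq_upd_iff: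
  assumes t: "\<tau> \<in> cube \<Lambda>" and L: "\<Lambda> \<subseteq> N" and a: "a \<in> N - \<Lambda>" and x: "x \<noteq> 0"
  shows "restr \<sigma> \<Lambda> = \<tau> \<and> \<sigma> a = x \<longleftrightarrow> agrees_with N (\<tau>(a := x)) \<sigma>"
  using restr_eq_iff_agrees_with[OF t L] agrees_with_upd_iff[of \<tau> a N x \<sigma>] cube_outside[OF t] a x
  by auto

lemma restr_eq_upd2_iff:
  assumes t: "\<tau> \<in> cube \<Lambda>" and L: "\<Lambda> \<subseteq> N" and a: "a \<in> N - \<Lambda>" and x: "x \<noteq> 0"
    and b: "b \<in> N - \<Lambda>" and y: "y \<noteq> 0" and ab: "a \<noteq> b"
  shows "restr \<sigma> \<Lambda> = \<tau> \<and> \<sigma> a = x \<and> \<sigma> b = y \<longleftrightarrow> agrees_with N (\<tau>(a := x, b := y)) \<sigma>"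
  using restr_eq_upd_iff[OF t L a x] agrees_with_upd_iff[of "\<tau>(a := x)" b N y \<sigma>]
    cube_outside[OF t] b y ab
  by auto

definition tilt_weight :: "'i set \<Rightarrow> ('i \<Rightarrow> real) \<Rightarrow> (('i \<Rightarrow> int) \<Rightarrow> real) \<Rightarrow> (('i \<Rightarrow> int) \<Rightarrow> bool) \<Rightarrow> real" where
  "tilt_weight N lam \<nu> E = (\<Sum>\<sigma>\<in>cube N. if E \<sigma> then \<nu> \<sigma> * (\<Prod>i\<in>{i\<in>N. \<sigma> i = 1}. lam i) else 0)"

lemma prob_tilt: "prob N (tilt N lam \<nu>) E = tilt_weight N lam \<nu> E / tilt_weight N lam \<nu> (\<lambda>_. True)"
  unfolding prob_def tilt_def tilt_weight_def sum_divide_distrib by (rule sum.cong) auto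

lemma prob_cond: "prob N (cond N \<nu> E) F = prob N \<nu> (\<lambda>\<sigma>. E \<sigma> \<and> F \<sigma>) / prob N \<nu> E"
  unfolding prob_def cond_def by (auto simp: sum_divide_distrib intro!: sum.cong)

lemma tilt_weight_cong:
  "(\<And>\<sigma>. \<sigma> \<in> cube N \<Longrightarrow> E \<sigma> = E' \<sigma>) \<Longrightarrow> tilt_weight N lam \<nu> E = tilt_weight N lam \<nu> E'"
  unfolding tilt_weight_def by (rule sum.cong) auto

lemma prob_cong: "(\<And>\<sigma>. \<sigma> \<in> cube N \<Longrightarrow> E \<sigma> = E' \<sigma>) \<Longrightarrow> prob N \<nu> E = prob N \<nu> E'"
  unfolding prob_def by (rule sum.cong) auto

lemma tilt_weight_nonneg:
  assumes "\<And>\<sigma>. \<nu> \<sigma> \<ge> 0" "\<And>i. i \<in> N \<Longrightarrow> lam i \<ge> 0"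
  shows "tilt_weight N lam \<nu> E \<ge> 0"
  unfolding tilt_weight_def using assms by (intro sum_nonneg) (auto intro!: mult_nonneg_nonneg prod_nonneg)

lemma tilt_weight_mono:
  assumes "\<And>\<sigma>. \<nu> \<sigma> \<ge> 0" "\<And>i. i \<in> N \<Longrightarrow> lam i \<ge> 0" "\<And>\<sigma>. \<sigma> \<in> cube N \<Longrightarrow> E \<sigma> \<Longrightarrow> E' \<sigma>"
  shows "tilt_weight N lam \<nu> E \<le> tilt_weight N lam \<nu> E'"
  unfolding tilt_weight_def using assms by (intro sum_mono) (auto intro!: mult_nonneg_nonneg prod_nonneg)

lemma divide_divide_cancel: "(z::real) \<noteq> 0 \<Longrightarrow> (a / z) / (b / z) = a / b"
  by (cases "b = 0") (simp_all add: field_simps)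

lemma prob_pin_tilt:
  assumes Z: "tilt_weight N lam \<nu> (\<lambda>_. True) \<noteq> 0"
  shows "prob N (pin N (tilt N lam \<nu>) \<Lambda> \<tau>) E
       = tilt_weight N lam \<nu> (\<lambda>\<sigma>. restr \<sigma> \<Lambda> = \<tau> \<and> E \<sigma>) / tilt_weight N lam \<nu> (\<lambda>\<sigma>. restr \<sigma> \<Lambda> = \<tau>)"
  unfolding pin_def prob_cond prob_tilt using divide_divide_cancel[OF Z] by simp

lemma prob_cond_pin_tilt:
  assumes Z: "tilt_weight N lam \<nu> (\<lambda>_. True) \<noteq> 0"
    and R: "tilt_weight N lam \<nu> (\<lambda>\<sigma>. restr \<sigma> \<Lambda> = \<tau>) \<noteq> 0"
  shows "prob N (cond N (pin N (tilt N lam \<nu>) \<Lambda> \<tau>) E) F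
       = tilt_weight N lam \<nu> (\<lambda>\<sigma>. restr \<sigma> \<Lambda> = \<tau> \<and> E \<sigma> \<and> F \<sigma>)
         / tilt_weight N lam \<nu> (\<lambda>\<sigma>. restr \<sigma> \<Lambda> = \<tau> \<and> E \<sigma>)"
  unfolding prob_cond prob_pin_tilt[OF Z] using divide_divide_cancel[OF R] by (simp add: conj_assoc)

definition factor_sum :: "'i set \<Rightarrow> (('i \<Rightarrow> int) \<Rightarrow> real) \<Rightarrow> ('i \<Rightarrow> int \<Rightarrow> real) \<Rightarrow> real" where
  "factor_sum N \<mu> \<phi> = (\<Sum>X\<in>cube N. \<mu> X * (\<Prod>l\<in>N. \<phi> l (X l)))"

definition delta :: "int \<Rightarrow> int \<Rightarrow> real" where
  "delta y x = (if x = y then 1 else 0)"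

definition allows :: "int \<Rightarrow> int \<Rightarrow> real" where
  "allows c x = (if c = 0 \<or> c = x then 1 else 0)"

lemma allows_0: "(\<lambda>y. allows 0 y * f y) = f"
  by (simp add: allows_def)

lemma prod_of_bool_eq:
  "finite N \<Longrightarrow> (\<Prod>l\<in>N. if P l then 1 else 0::real) = (if \<forall>l\<in>N. P l then 1 else 0)"
  by (cases "\<forall>l\<in>N. P l") (auto intro: prod.neutral)

lemma tilt_weight_agrees_with:
  assumes N: "finite N"
  shows "tilt_weight N lam \<mu> (agrees_with N w)
       = factor_sum N \<mu> (\<lambda>l x. allows (w l) x * (if x = 1 then lam l else 1))"
  unfolding tilt_weight_def factor_sum_def
proof (rule sum.cong[OF refl])
  fix \<sigma> assume "\<sigma> \<in> cube N"
  have "(\<Prod>l\<in>N. allows (w l) (\<sigma> l) * (if \<sigma> l = 1 then lam l else 1))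
     = (\<Prod>l\<in>N. allows (w l) (\<sigma> l)) * (\<Prod>l\<in>N. if \<sigma> l = 1 then lam l else 1)"
    by (rule prod.distrib)
  also have "(\<Prod>l\<in>N. allows (w l) (\<sigma> l)) = (if agrees_with N w \<sigma> then 1 else 0)"
    unfolding allows_def prod_of_bool_eq[OF N] agrees_with_def by (intro if_cong) auto
  also have "(\<Prod>l\<in>N. if \<sigma> l = 1 then lam l else 1) = (\<Prod>i\<in>{i\<in>N. \<sigma> i = 1}. lam i)"
    using prod.inter_filter[OF N] by metis
  finally show "(if agrees_with N w \<sigma> then \<mu> \<sigma> * (\<Prod>i\<in>{i\<in>N. \<sigma> i = 1}. lam i) else 0)
      = \<mu> \<sigma> * (\<Prod>l\<in>N. allows (w l) (\<sigma> l) * (if \<sigma> l = 1 then lam l else 1))"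
    by simp
qed

lemma factor_sum_split:
  assumes N: "finite N" and i: "i \<in> N"
  shows "factor_sum N \<mu> \<phi>
      = \<phi> i 1 * factor_sum N \<mu> (\<phi>(i := delta 1)) + \<phi> i (-1) * factor_sum N \<mu> (\<phi>(i := delta (-1)))"
  unfolding factor_sum_def sum_distrib_left sum.distrib[symmetric]
proof (rule sum.cong[OF refl])
  fix X assume X: "X \<in> cube N"
  let ?R = "\<Prod>l\<in>N-{i}. \<phi> l (X l)"
  have e1: "(\<Prod>l\<in>N. \<phi> l (X l)) = \<phi> i (X i) * ?R" using prod.remove[OF N i] by blast
  have e2: "(\<Prod>l\<in>N. (\<phi>(i := d)) l (X l)) = d (X i) * ?R" for d
  proof -
    have "(\<Prod>l\<in>N-{i}. (\<phi>(i := d)) l (X l)) = ?R" by (rule prod.cong) auto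
    then show ?thesis using prod.remove[OF N i, of "\<lambda>l. (\<phi>(i := d)) l (X l)"] by simp
  qed
  show "\<mu> X * (\<Prod>l\<in>N. \<phi> l (X l)) =
        \<phi> i 1 * (\<mu> X * (\<Prod>l\<in>N. (\<phi>(i := delta 1)) l (X l))) + \<phi> i (-1) * (\<mu> X * (\<Prod>l\<in>N. (\<phi>(i := delta (-1))) l (X l)))"
    unfolding e1 e2 using cube_value[OF X i] by (auto simp: delta_def)
qed

lemma factor_sum_scale:
  assumes "\<And>l x. l \<in> N \<Longrightarrow> x \<in> {-1, 1} \<Longrightarrow> \<phi> l x = c l * \<phi>' l x"
  shows "factor_sum N \<mu> \<phi> = (\<Prod>l\<in>N. c l) * factor_sum N \<mu> \<phi>'"
  unfolding factor_sum_def sum_distrib_left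
proof (rule sum.cong[OF refl])
  fix X assume X: "X \<in> cube N"
  have "(\<Prod>l\<in>N. \<phi> l (X l)) = (\<Prod>l\<in>N. c l * \<phi>' l (X l))"
    using assms cube_value[OF X] by (intro prod.cong) auto
  then show "\<mu> X * (\<Prod>l\<in>N. \<phi> l (X l)) = prod c N * (\<mu> X * (\<Prod>l\<in>N. \<phi>' l (X l)))"
    by (simp add: prod.distrib)
qed

lemma factor_sum_cong:
  assumes "\<And>l x. l \<in> N \<Longrightarrow> x \<in> {-1, 1} \<Longrightarrow> \<phi> l x = \<phi>' l x"
  shows "factor_sum N \<mu> \<phi> = factor_sum N \<mu> \<phi>'"
  using factor_sum_scale[of N \<phi> "\<lambda>_. 1" \<phi>' \<mu>] assms by simp

lemma factor_sum_nonneg: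
  assumes mu: "\<And>X. \<mu> X \<ge> 0"
    and "\<And>l x. l \<in> N \<Longrightarrow> x \<in> {-1, 1} \<Longrightarrow> 0 \<le> \<phi> l x"
  shows "0 \<le> factor_sum N \<mu> \<phi>"
  unfolding factor_sum_def
      using assms by (intro sum_nonneg mult_nonneg_nonneg prod_nonneg) (auto dest: cube_value)

lemma factor_sum_eq_0:
  assumes N: "finite N" and i: "i \<in> N" and "\<phi> i 1 = 0" "\<phi> i (-1) = 0"
  shows "factor_sum N \<mu> \<phi> = 0"
  using factor_sum_split[OF N i, of \<mu> \<phi>] assms by simp

definition flip :: "'i \<Rightarrow> ('i \<Rightarrow> int) \<Rightarrow> ('i \<Rightarrow> int)" where
  "flip i X = X(i := - X i)"

lemma bij_betw_flip:
  assumes i: "i \<in> N"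
  shows "bij_betw (flip i) (cube N) (cube N)"
proof -
  have inv: "flip i (flip i X) = X" for X by (auto simp: flip_def)
  have mem: "X \<in> cube N \<Longrightarrow> flip i X \<in> cube N" for X using i by (auto simp: cube_def flip_def)
  show ?thesis
    by (rule bij_betwI[where g="flip i"]) (auto simp: inv mem)
qed

lemma factor_sum_flip_le:
  assumes N: "finite N" and i: "i \<in> N" and mu: "\<And>X. \<mu> X \<ge> 0"
    and phi: "\<And>l x. l \<in> N \<Longrightarrow> x \<in> {-1, 1} \<Longrightarrow> 0 \<le> \<phi> l x"
    and fl: "\<And>X. X \<in> cube N \<Longrightarrow> X i = 1 \<Longrightarrow> m * \<mu> X \<le> \<mu> (X(i := -1))"
  shows "m * factor_sum N \<mu> (\<phi>(i := delta 1)) \<le> factor_sum N \<mu> (\<phi>(i := delta (-1)))"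
proof -
  define R where "R X = (\<Prod>l\<in>N-{i}. \<phi> l (X l))" for X
  have e2: "(\<Prod>l\<in>N. (\<phi>(i := d)) l (X l)) = d (X i) * R X" for d X
  proof -
    have "(\<Prod>l\<in>N-{i}. (\<phi>(i := d)) l (X l)) = R X" unfolding R_def by (rule prod.cong) auto
    then show ?thesis using prod.remove[OF N i, of "\<lambda>l. (\<phi>(i := d)) l (X l)"] by simp
  qed
  have Rf: "R (flip i X) = R X" for X unfolding R_def flip_def by (rule prod.cong) auto
  have R0: "X \<in> cube N \<Longrightarrow> R X \<ge> 0" for X unfolding R_def using phi cube_value[of X N] by (intro prod_nonneg) auto
  have "factor_sum N \<mu> (\<phi>(i := delta (-1))) = (\<Sum>X\<in>cube N. \<mu> X * (delta (-1) (X i) * R X))"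
    unfolding factor_sum_def e2 ..
  also have "\<dots> = (\<Sum>X\<in>cube N. \<mu> (flip i X) * (delta (-1) (flip i X i) * R (flip i X)))"
    using sum.reindex_bij_betw[OF bij_betw_flip[OF i], of "\<lambda>X. \<mu> X * (delta (-1) (X i) * R X)"] by simp
  also have "\<dots> = (\<Sum>X\<in>cube N. \<mu> (flip i X) * (delta 1 (X i) * R X))"
    unfolding Rf by (rule sum.cong) (auto simp: flip_def delta_def)
  finally have eq: "factor_sum N \<mu> (\<phi>(i := delta (-1))) = (\<Sum>X\<in>cube N. \<mu> (flip i X) * (delta 1 (X i) * R X))" .
  have "m * factor_sum N \<mu> (\<phi>(i := delta 1)) = (\<Sum>X\<in>cube N. (m * \<mu> X) * (delta 1 (X i) * R X))"
    unfolding factor_sum_def e2 sum_distrib_left by (simp add: mult.assoc)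
  also have "\<dots> \<le> (\<Sum>X\<in>cube N. \<mu> (flip i X) * (delta 1 (X i) * R X))"
  proof (rule sum_mono)
    fix X assume X: "X \<in> cube N"
    show "m * \<mu> X * (delta 1 (X i) * R X) \<le> \<mu> (flip i X) * (delta 1 (X i) * R X)"
    proof (cases "X i = 1")
      case True
      then have "flip i X = X(i := -1)" by (simp add: flip_def)
      then show ?thesis using fl[OF X True] R0[OF X] True by (intro mult_right_mono) (auto simp: delta_def)
    qed (auto simp: delta_def)
  qed
  finally show ?thesis unfolding eq .
qed

lemma mu_min_neg_le:
  assumes N: "finite N" and v: "v \<in> N" and \<sigma>: "\<sigma> \<in> supp_marg N \<mu> (N - {v})"
  shows "mu_min_neg N \<mu> \<le> prob N (pin N \<mu> (N - {v}) \<sigma>) (\<lambda>\<sigma>. \<sigma> v = -1)"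
  unfolding mu_min_neg_def
proof (rule Min_le)
  show "finite (\<Union>v\<in>N. (\<lambda>\<tau>. prob N (pin N \<mu> (N - {v}) \<tau>) (\<lambda>\<sigma>. \<sigma> v = -1)) ` supp_marg N \<mu> (N - {v}))"
  proof (intro finite_UN_I N finite_imageI)
    fix v
    show "finite (supp_marg N \<mu> (N - {v}))"
      by (rule finite_subset[OF _ finite_cube[of "N - {v}"]]) (use N in \<open>auto simp: supp_marg_def\<close>)
  qed
qed (use v \<sigma> in blast)

lemma restr_eq_remove_iff:
  assumes i: "i \<in> N" and X: "X \<in> cube N" and Xi: "X i = 1"
  shows "{Z\<in>cube N. restr Z (N - {i}) = restr X (N - {i})} = {X, X(i := -1)}"
proof (rule equalityI; rule subsetI)
  fix Z assume Z: "Z \<in> {Z\<in>cube N. restr Z (N - {i}) = restr X (N - {i})}"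
  then have Zc: "Z \<in> cube N" and Zr: "restr Z (N - {i}) = restr X (N - {i})" by auto
  have agree: "Z l = X l" if "l \<noteq> i" for l
  proof (cases "l \<in> N")
    case True then show ?thesis using Zr that unfolding restr_def by (metis DiffI singletonD)
  qed (use cube_outside[OF Zc] cube_outside[OF X] in auto)
  from cube_value[OF Zc i] show "Z \<in> {X, X(i := -1)}"
    using agree Xi by (metis fun_upd_apply insertCI ext)
next
  fix Z assume "Z \<in> {X, X(i := -1)}"
  moreover have "restr (X(i := -1)) (N - {i}) = restr X (N - {i})"
    unfolding restr_def by (rule ext) auto
  moreover have "X(i := -1) \<in> cube N" using X i by (auto simp: cube_def)
  ultimately show "Z \<in> {Z\<in>cube N. restr Z (N - {i}) = restr X (N - {i})}" using X by auto
qed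

lemma mu_min_neg_mult_le_flip:
  assumes dist: "is_dist N \<mu>" and i: "i \<in> N" and X: "X \<in> cube N" and Xi: "X i = 1"
  shows "mu_min_neg N \<mu> * \<mu> X \<le> \<mu> (X(i := -1))"
proof -
  have N: "finite N" and mu0: "\<And>Z. \<mu> Z \<ge> 0" using dist by (auto simp: is_dist_def)
  define \<sigma> where "\<sigma> = restr X (N - {i})"
  have ne: "X \<noteq> X(i := -1)" using Xi by (auto simp: fun_eq_iff)
  have "{Z\<in>cube N. restr Z (N - {i}) = \<sigma> \<and> Z i = -1} = {Z\<in>{X, X(i := -1)}. Z i = -1}"
    using restr_eq_remove_iff[OF i X Xi] unfolding \<sigma>_def by blast
  also have "\<dots> = {X(i := -1)}" using Xi by auto
  finally have p_minus: "prob N \<mu> (\<lambda>Z. restr Z (N - {i}) = \<sigma> \<and> Z i = -1) = \<mu> (X(i := -1))"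
    unfolding prob_def by (simp add: sum.inter_filter[OF finite_cube[OF N], symmetric])
  have p: "prob N \<mu> (\<lambda>Z. restr Z (N - {i}) = \<sigma>) = \<mu> X + \<mu> (X(i := -1))"
    unfolding prob_def sum.inter_filter[OF finite_cube[OF N], symmetric] \<sigma>_def
      restr_eq_remove_iff[OF i X Xi] using ne by simp
  show ?thesis
  proof (cases "\<mu> X + \<mu> (X(i := -1)) > 0")
    case False
    then have "\<mu> X = 0" using mu0[of X] mu0[of "X(i := -1)"] by linarith
    then show ?thesis using mu0 by simp
  next
    case True
    have "\<sigma> \<in> cube (N - {i})" using X unfolding \<sigma>_def restr_def cube_def by auto
    then have "\<sigma> \<in> supp_marg N \<mu> (N - {i})"
      unfolding supp_marg_def marg_def using p True by simp
    from mu_min_neg_le[OF N i this]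
    have m: "mu_min_neg N \<mu> \<le> \<mu> (X(i := -1)) / (\<mu> X + \<mu> (X(i := -1)))"
      unfolding pin_def prob_cond p p_minus .
    show ?thesis
    proof (cases "mu_min_neg N \<mu> \<le> 0")
      case True then show ?thesis using mu0[of X] mu0[of "X(i := -1)"]
        by (meson mult_nonpos_nonneg order.trans)
    next
      case False
      have "mu_min_neg N \<mu> * \<mu> X \<le> mu_min_neg N \<mu> * (\<mu> X + \<mu> (X(i := -1)))"
        using False mu0[of "X(i := -1)"] by (intro mult_left_mono) auto
      also have "\<dots> \<le> \<mu> (X(i := -1))" using m True by (simp add: le_divide_eq)
      finally show ?thesis .
    qed
  qed
qed

section \<open>The tilted k-transformation as a product over blocks\<close>

text \<open>Coordinate \<open>(i, j)\<close> of the k-transformation belongs to block \<open>i\<close>.  The configurations in its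
  support are obtained from some \<open>X \<in> cube N\<close> by choosing, for every \<open>i\<close> with \<open>X i = 1\<close>,
  the position \<open>c i\<close> of the unique \<open>+1\<close> in block \<open>i\<close>.\<close>



definition spread :: "'i set \<Rightarrow> nat \<Rightarrow> ('i \<Rightarrow> int) \<Rightarrow> ('i \<Rightarrow> nat) \<Rightarrow> ('i \<times> nat \<Rightarrow> int)" where
  "spread N k X c = (\<lambda>(i,j). if i \<in> N \<and> j \<in> {1..k} then (if X i = 1 \<and> c i = j then 1 else -1) else 0)"

definition Rd_support :: "'i set \<Rightarrow> nat \<Rightarrow> ('i \<times> nat \<Rightarrow> int) set" where
  "Rd_support N k = {Y \<in> cube (N \<times> {1..k}). \<forall>i\<in>N. card {j\<in>{1..k}. Y (i, j) = 1} \<le> 1}"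

definition plus_set :: "'i set \<Rightarrow> ('i \<Rightarrow> int) \<Rightarrow> 'i set" where
  "plus_set N X = {i\<in>N. X i = 1}"

definition collapse :: "'i set \<Rightarrow> nat \<Rightarrow> ('i \<times> nat \<Rightarrow> int) \<Rightarrow> ('i \<Rightarrow> int)" where
  "collapse N k Y = (\<lambda>i. if i \<in> N then (if \<exists>j\<in>{1..k}. Y (i, j) = 1 then 1 else -1) else 0)"

abbreviation spread_domain :: "'i set \<Rightarrow> nat \<Rightarrow> (('i \<Rightarrow> int) \<times> ('i \<Rightarrow> nat)) set" where
  "spread_domain N k \<equiv> Sigma (cube N) (\<lambda>X. PiE (plus_set N X) (\<lambda>_. {1..k}))"

lemma spread_in_cube: "spread N k X c \<in> cube (N \<times> {1..k})"
  unfolding spread_def cube_def by auto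

lemma spread_in_Rd_support:
  assumes c: "c \<in> PiE (plus_set N X) (\<lambda>_. {1..k})"
  shows "spread N k X c \<in> Rd_support N k"
  unfolding Rd_support_def
proof (intro CollectI conjI ballI spread_in_cube)
  fix i assume i: "i \<in> N"
  have "{j\<in>{1..k}. spread N k X c (i, j) = 1} \<subseteq> {c i}" unfolding spread_def by auto
  then have "card {j\<in>{1..k}. spread N k X c (i, j) = 1} \<le> card {c i}"
    by (intro card_mono) auto
  then show "card {j\<in>{1..k}. spread N k X c (i, j) = 1} \<le> 1" by simp
qed

lemma collapse_spread:
  assumes X: "X \<in> cube N" and c: "c \<in> PiE (plus_set N X) (\<lambda>_. {1..k})"
  shows "collapse N k (spread N k X c) = X"
  unfolding collapse_def
proof
  fix i show "(if i \<in> N then (if \<exists>j\<in>{1..k}. spread N k X c (i, j) = 1 then 1 else -1) else 0) = X i"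
  proof (cases "i \<in> N")
    case True
    show ?thesis
    proof (cases "X i = 1")
      case True2: True
      then have "c i \<in> {1..k}" using c \<open>i \<in> N\<close> by (auto simp: plus_set_def)
      then show ?thesis using True True2 by (auto simp: spread_def intro!: bexI[of _ "c i"])
    next
      case False
      then have "X i = -1" using cube_value[OF X True] by auto
      then show ?thesis using True False by (auto simp: spread_def)
    qed
  qed (use cube_outside[OF X] in auto)
qed

lemma plus_coords_spread:
  assumes X: "X \<in> cube N" and c: "c \<in> PiE (plus_set N X) (\<lambda>_. {1..k})"
  shows "{a \<in> N \<times> {1..k}. spread N k X c a = 1} = (\<lambda>i. (i, c i)) ` plus_set N X"
proof
  show "{a \<in> N \<times> {1..k}. spread N k X c a = 1} \<subseteq> (\<lambda>i. (i, c i)) ` plus_set N X"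
  proof
    fix a assume a: "a \<in> {a \<in> N \<times> {1..k}. spread N k X c a = 1}"
    obtain i j where ij: "a = (i,j)" by (cases a)
    have "X i = 1" "c i = j" "i \<in> N" using a ij by (auto simp: spread_def split: if_splits)
    then show "a \<in> (\<lambda>i. (i, c i)) ` plus_set N X" using ij by (auto simp: plus_set_def)
  qed
  show "(\<lambda>i. (i, c i)) ` plus_set N X \<subseteq> {a \<in> N \<times> {1..k}. spread N k X c a = 1}"
    using c by (auto simp: spread_def plus_set_def PiE_def Pi_def)
qed

lemma inj_on_spread: "inj_on (\<lambda>(X,c). spread N k X c) (spread_domain N k)"
proof (rule inj_onI, clarify)
  fix X c X' c'
  assume X: "X \<in> cube N" and c: "c \<in> PiE (plus_set N X) (\<lambda>_. {1..k})"
    and X': "X' \<in> cube N" and c': "c' \<in> PiE (plus_set N X') (\<lambda>_. {1..k})"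
    and eq: "spread N k X c = spread N k X' c'"
  have XX: "X = X'" using collapse_spread[OF X c] collapse_spread[OF X' c'] eq by metis
  have "c i = c' i" if i: "i \<in> plus_set N X" for i
  proof -
    have ci: "c i \<in> {1..k}" "i \<in> N" "X i = 1" using c i by (auto simp: plus_set_def)
    then have "spread N k X c (i, c i) = 1" by (simp add: spread_def)
    then have "spread N k X' c' (i, c i) = 1" using eq by simp
    then show ?thesis using ci by (auto simp: spread_def split: if_splits)
  qed
  then show "X = X' \<and> c = c'" using XX PiE_ext[OF c] c' by auto
qed

lemma Rd_support_plus_unique:
  assumes Y: "Y \<in> Rd_support N k" and i: "i \<in> N" and j: "j \<in> {1..k}" "j' \<in> {1..k}"
    and Y1: "Y (i, j) = 1" "Y (i, j') = 1"
  shows "j = j'"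
  using Y i j Y1 card_le_Suc0_iff_eq[of "{j\<in>{1..k}. Y (i, j) = 1}"] by (auto simp: Rd_support_def)

lemma Rd_support_eq_spread:
  assumes Y: "Y \<in> Rd_support N k"
    and c: "\<And>i. i \<in> plus_set N (collapse N k Y) \<Longrightarrow> c i \<in> {1..k} \<and> Y (i, c i) = 1"
  shows "Y = spread N k (collapse N k Y) c"
proof
  fix a :: "'a \<times> nat"
  obtain i j where a: "a = (i, j)" by (cases a)
  have Yc: "Y \<in> cube (N \<times> {1..k})" using Y by (simp add: Rd_support_def)
  show "Y a = spread N k (collapse N k Y) c a"
  proof (cases "i \<in> N \<and> j \<in> {1..k}")
    case False
    then show ?thesis using cube_outside[OF Yc, of a] a by (auto simp: spread_def)
  next
    case True
    show ?thesis
    proof (cases "Y (i, j) = 1")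
      case True2: True
      then have P: "i \<in> plus_set N (collapse N k Y)" using True by (auto simp: plus_set_def collapse_def)
      then have "c i = j" using c[OF P] Rd_support_plus_unique[OF Y, of i "c i" j] True True2 by auto
      then show ?thesis using True2 True P a by (auto simp: spread_def plus_set_def)
    next
      case False
      then have "Y (i, j) = -1" using cube_value[OF Yc, of a] a True by auto
      moreover have "\<not> (collapse N k Y i = 1 \<and> c i = j)"
        using c[of i] True False by (auto simp: plus_set_def)
      ultimately show ?thesis using True a by (auto simp: spread_def)
    qed
  qed
qed

lemma Rd_support_subset_spread:
  assumes Y: "Y \<in> Rd_support N k"
  shows "Y \<in> (\<lambda>(X,c). spread N k X c) ` spread_domain N k"
proof -
  define X where "X = collapse N k Y"
  define c where "c i = (if i \<in> plus_set N X then (SOME j. j \<in> {1..k} \<and> Y (i, j) = 1) else undefined)" for i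
  have X: "X \<in> cube N" unfolding X_def collapse_def cube_def by auto
  have cP: "c i \<in> {1..k} \<and> Y (i, c i) = 1" if i: "i \<in> plus_set N X" for i
  proof -
    have "\<exists>j. j \<in> {1..k} \<and> Y (i, j) = 1"
        using i by (auto simp: plus_set_def X_def collapse_def split: if_splits)
    from someI_ex[OF this] show ?thesis using i unfolding c_def by simp
  qed
  have "c \<in> PiE (plus_set N X) (\<lambda>_. {1..k})" using cP by (auto simp: c_def PiE_def Pi_def extensional_def)
  moreover have "Y = spread N k X c" unfolding X_def by (rule Rd_support_eq_spread[OF Y cP[unfolded X_def]])
  ultimately show ?thesis using X by force
qed

lemma spread_image: "(\<lambda>(X,c). spread N k X c) ` spread_domain N k = Rd_support N k"
  using Rd_support_subset_spread[of _ N k] spread_in_Rd_support by force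

text \<open>Summing the tilted weight of the k-transformation over the positions of the \<open>+1\<close>s
  factorises over the blocks: given a partial configuration \<open>z\<close>, block \<open>i\<close> contributes
  \<open>block_factor lam k z i (X i)\<close>: the total field \<open>lam (i, j) / k\<close> of the positions \<open>j\<close> that may
  carry the \<open>+1\<close> if \<open>X i = 1\<close>, and the indicator that \<open>z\<close> pins no \<open>+1\<close> in block \<open>i\<close> if \<open>X i = -1\<close>.\<close>

definition plus_allowed :: "nat \<Rightarrow> ('i \<times> nat \<Rightarrow> int) \<Rightarrow> 'i \<Rightarrow> nat \<Rightarrow> bool" where
  "plus_allowed k z i j \<longleftrightarrow> (\<forall>j'\<in>{1..k}. z (i,j') \<noteq> 0 \<longrightarrow> z (i,j') = (if j' = j then 1 else -1))"

definition minus_allowed :: "nat \<Rightarrow> ('i \<times> nat \<Rightarrow> int) \<Rightarrow> 'i \<Rightarrow> bool" where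
  "minus_allowed k z i \<longleftrightarrow> (\<forall>j\<in>{1..k}. z (i,j) \<noteq> 0 \<longrightarrow> z (i,j) = -1)"

definition block_factor :: "('i \<times> nat \<Rightarrow> real) \<Rightarrow> nat \<Rightarrow> ('i \<times> nat \<Rightarrow> int) \<Rightarrow> 'i \<Rightarrow> int \<Rightarrow> real" where
  "block_factor lam k z i x =
    (if x = 1 then (\<Sum>j\<in>{1..k}. lam (i,j) / real k * (if plus_allowed k z i j then 1 else 0))
                        else (if minus_allowed k z i then 1 else 0))"

lemma agrees_with_spread:
  assumes X: "X \<in> cube N" and c: "c \<in> PiE (plus_set N X) (\<lambda>_. {1..k})"
  shows "agrees_with (N \<times> {1..k}) z (spread N k X c)
     \<longleftrightarrow> (\<forall>i\<in>plus_set N X. plus_allowed k z i (c i)) \<and> (\<forall>i\<in>N - plus_set N X. minus_allowed k z i)"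
proof -
  have "agrees_with (N \<times> {1..k}) z (spread N k X c)
     \<longleftrightarrow> (\<forall>i\<in>N. \<forall>j\<in>{1..k}. z (i,j) \<noteq> 0 \<longrightarrow> spread N k X c (i,j) = z (i,j))"
    unfolding agrees_with_def by auto
  also have "\<dots> \<longleftrightarrow> (\<forall>i\<in>N. if X i = 1 then plus_allowed k z i (c i) else minus_allowed k z i)"
  proof (intro ball_cong refl)
    fix i assume i: "i \<in> N"
    show "(\<forall>j\<in>{1..k}. z (i,j) \<noteq> 0 \<longrightarrow> spread N k X c (i,j) = z (i,j))
        = (if X i = 1 then plus_allowed k z i (c i) else minus_allowed k z i)"
    proof (cases "X i = 1")
      case True
      have "spread N k X c (i,j) = (if j = c i then 1 else -1)" if "j \<in> {1..k}" for j
        using True i that by (auto simp: spread_def)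
      then show ?thesis using True unfolding plus_allowed_def by (metis (no_types, lifting))
    next
      case False
      have "spread N k X c (i,j) = -1" if "j \<in> {1..k}" for j
        using False i that by (auto simp: spread_def)
      then show ?thesis using False unfolding minus_allowed_def by (metis (no_types, lifting))
    qed
  qed
  also have "\<dots> \<longleftrightarrow> (\<forall>i\<in>plus_set N X. plus_allowed k z i (c i)) \<and> (\<forall>i\<in>N - plus_set N X. minus_allowed k z i)"
    unfolding plus_set_def by auto
  finally show ?thesis .
qed

lemma Rd_nonneg:
  assumes "\<And>X. \<mu> X \<ge> 0"
  shows "Rd N \<mu> k Y \<ge> 0"
  unfolding Rd_def using assms by (auto simp: Let_def)

lemma Rd_spread:
  assumes X: "X \<in> cube N" and c: "c \<in> PiE (plus_set N X) (\<lambda>_. {1..k})"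
  shows "Rd N \<mu> k (spread N k X c) = \<mu> X * (1 / real k) ^ card (plus_set N X)"
  using spread_in_Rd_support[OF c] collapse_spread[OF X c]
  unfolding Rd_def Rd_support_def plus_set_def collapse_def by (simp add: Let_def)

lemma tilt_weight_spread:
  assumes N: "finite N" and X: "X \<in> cube N" and c: "c \<in> PiE (plus_set N X) (\<lambda>_. {1..k})"
  shows "(if agrees_with (N \<times> {1..k}) z (spread N k X c)
            then Rd N \<mu> k (spread N k X c) * (\<Prod>a\<in>{a\<in>N \<times> {1..k}. spread N k X c a = 1}. lam a) else 0)
       = \<mu> X * (\<Prod>i\<in>N - plus_set N X. if minus_allowed k z i then 1 else 0)
         * (\<Prod>i\<in>plus_set N X. lam (i, c i) / real k * (if plus_allowed k z i (c i) then 1 else 0))"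
proof -
  let ?P = "plus_set N X"
  have fP: "finite ?P" using N by (simp add: plus_set_def)
  have pr: "(\<Prod>a\<in>{a\<in>N \<times> {1..k}. spread N k X c a = 1}. lam a) = (\<Prod>i\<in>?P. lam (i, c i))"
    unfolding plus_coords_spread[OF X c] by (subst prod.reindex) (auto intro: inj_onI simp: o_def)
  have ind: "(if (\<forall>i\<in>?P. plus_allowed k z i (c i)) \<and> (\<forall>i\<in>N - ?P. minus_allowed k z i) then 1 else 0::real)
      = (\<Prod>i\<in>?P. if plus_allowed k z i (c i) then 1 else 0) * (\<Prod>i\<in>N - ?P. if minus_allowed k z i then 1 else 0)"
    using prod_of_bool_eq[OF fP, of "\<lambda>i. plus_allowed k z i (c i)"]
        prod_of_bool_eq[of "N - ?P" "minus_allowed k z"] N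
    by auto
  have "(if agrees_with (N \<times> {1..k}) z (spread N k X c)
            then Rd N \<mu> k (spread N k X c) * (\<Prod>a\<in>{a\<in>N \<times> {1..k}. spread N k X c a = 1}. lam a) else 0)
      = (if (\<forall>i\<in>?P. plus_allowed k z i (c i)) \<and> (\<forall>i\<in>N - ?P. minus_allowed k z i) then 1 else 0)
        * (\<mu> X * (\<Prod>i\<in>?P. 1 / real k) * (\<Prod>i\<in>?P. lam (i, c i)))"
    unfolding agrees_with_spread[OF X c] Rd_spread[OF X c] pr by simp
  also have "\<dots> = \<mu> X * (\<Prod>i\<in>N - ?P. if minus_allowed k z i then 1 else 0)
      * ((\<Prod>i\<in>?P. if plus_allowed k z i (c i) then 1 else 0) * (\<Prod>i\<in>?P. 1 / real k) * (\<Prod>i\<in>?P. lam (i, c i)))"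
    unfolding ind by simp
  also have "(\<Prod>i\<in>?P. if plus_allowed k z i (c i) then 1 else 0) * (\<Prod>i\<in>?P. 1 / real k) * (\<Prod>i\<in>?P. lam (i, c i))
      = (\<Prod>i\<in>?P. lam (i, c i) / real k * (if plus_allowed k z i (c i) then 1 else 0))"
    unfolding prod.distrib[symmetric] by (rule prod.cong) auto
  finally show ?thesis .
qed

lemma sum_tilt_weight_spread:
  assumes N: "finite N" and X: "X \<in> cube N"
  shows "(\<Sum>c\<in>PiE (plus_set N X) (\<lambda>_. {1..k}). if agrees_with (N \<times> {1..k}) z (spread N k X c)
            then Rd N \<mu> k (spread N k X c) * (\<Prod>a\<in>{a\<in>N \<times> {1..k}. spread N k X c a = 1}. lam a) else 0)
       = \<mu> X * (\<Prod>l\<in>N. block_factor lam k z l (X l))"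
proof -
  let ?P = "plus_set N X"
  have fP: "finite ?P" using N by (simp add: plus_set_def)
  have "(\<Sum>c\<in>PiE ?P (\<lambda>_. {1..k}). \<Prod>i\<in>?P. lam (i, c i) / real k * (if plus_allowed k z i (c i) then 1 else 0))
      = (\<Prod>i\<in>?P. \<Sum>j\<in>{1..k}. lam (i, j) / real k * (if plus_allowed k z i j then 1 else 0))"
    by (rule prod_sum_PiE[symmetric]) (auto simp: fP)
  also have "\<dots> = (\<Prod>l\<in>?P. block_factor lam k z l (X l))"
    by (rule prod.cong) (auto simp: plus_set_def block_factor_def)
  finally have plus: "(\<Sum>c\<in>PiE ?P (\<lambda>_. {1..k}). \<Prod>i\<in>?P. lam (i, c i) / real k * (if plus_allowed k z i (c i)
        then 1 else 0))
      = (\<Prod>l\<in>?P. block_factor lam k z l (X l))" .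
  have minus: "(\<Prod>i\<in>N - ?P. if minus_allowed k z i then 1 else 0) = (\<Prod>l\<in>N - ?P. block_factor lam k z l (X l))"
  proof (rule prod.cong[OF refl])
    fix l assume l: "l \<in> N - ?P"
    then have "X l = -1" using cube_value[OF X, of l] by (auto simp: plus_set_def)
    then show "(if minus_allowed k z l then 1 else 0) = block_factor lam k z l (X l)"
      by (simp add: block_factor_def)
  qed
  have "(\<Sum>c\<in>PiE ?P (\<lambda>_. {1..k}). if agrees_with (N \<times> {1..k}) z (spread N k X c)
            then Rd N \<mu> k (spread N k X c) * (\<Prod>a\<in>{a\<in>N \<times> {1..k}. spread N k X c a = 1}. lam a) else 0)
      = (\<Sum>c\<in>PiE ?P (\<lambda>_. {1..k}). \<mu> X * (\<Prod>i\<in>N - ?P. if minus_allowed k z i then 1 else 0)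
         * (\<Prod>i\<in>?P. lam (i, c i) / real k * (if plus_allowed k z i (c i) then 1 else 0)))"
    by (rule sum.cong[OF refl]) (rule tilt_weight_spread[OF N X])
  also have "\<dots> = \<mu> X * (\<Prod>l\<in>N - ?P. block_factor lam k z l (X l)) * (\<Prod>l\<in>?P. block_factor lam k z l (X l))"
    by (simp only: sum_distrib_left[symmetric] plus minus)
  also have "\<dots> = \<mu> X * (\<Prod>l\<in>N. block_factor lam k z l (X l))"
    using prod.subset_diff[of ?P N "\<lambda>l. block_factor lam k z l (X l)"] N by (simp add: plus_set_def mult.assoc)
  finally show ?thesis .
qed

lemma tilt_weight_Rd_agrees_with:
  assumes N: "finite N" and \<mu>: "\<And>X. X \<notin> cube N \<Longrightarrow> \<mu> X = 0"
  shows "tilt_weight (N \<times> {1..k}) lam (Rd N \<mu> k) (agrees_with (N \<times> {1..k}) z)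
       = factor_sum N \<mu> (block_factor lam k z)"
proof -
  define F where "F Y = (if agrees_with (N \<times> {1..k}) z Y
      then Rd N \<mu> k Y * (\<Prod>a\<in>{a\<in>N \<times> {1..k}. Y a = 1}. lam a) else 0)" for Y
  have "tilt_weight (N \<times> {1..k}) lam (Rd N \<mu> k) (agrees_with (N \<times> {1..k}) z)
      = (\<Sum>Y\<in>cube (N \<times> {1..k}). F Y)"
    unfolding tilt_weight_def F_def ..
  also have "\<dots> = (\<Sum>Y\<in>Rd_support N k. F Y)"
    by (rule sum.mono_neutral_right)
      (use finite_cube[of "N \<times> {1..k}"] N in \<open>auto simp: F_def Rd_def Rd_support_def\<close>)
  also have "\<dots> = (\<Sum>(X,c)\<in>spread_domain N k. F (spread N k X c))"
    unfolding spread_image[symmetric, of N k]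
    by (subst sum.reindex[OF inj_on_spread]) (simp add: case_prod_unfold)
  also have "\<dots> = (\<Sum>X\<in>cube N. \<Sum>c\<in>PiE (plus_set N X) (\<lambda>_. {1..k}). F (spread N k X c))"
    by (rule sum.Sigma[symmetric])
      (use finite_cube[OF N] N in \<open>auto intro!: finite_PiE simp: plus_set_def\<close>)
  also have "\<dots> = factor_sum N \<mu> (block_factor lam k z)"
    unfolding factor_sum_def F_def by (rule sum.cong[OF refl]) (rule sum_tilt_weight_spread[OF N])
  finally show ?thesis .
qed

lemma block_factor_nonneg:
  assumes "\<And>j. j \<in> {1..k} \<Longrightarrow> lam (l,j) \<ge> 0"
  shows "block_factor lam k z l x \<ge> 0"
  unfolding block_factor_def using assms by (auto intro!: sum_nonneg)

lemma block_factor_cong: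
  assumes "\<And>j. j \<in> {1..k} \<Longrightarrow> z (l,j) = z' (l,j)"
  shows "block_factor lam k z l = block_factor lam k z' l"
proof -
  have g: "plus_allowed k z l = plus_allowed k z' l" unfolding plus_allowed_def
      using assms by (intro ext ball_cong) auto
  have h: "minus_allowed k z l = minus_allowed k z' l" unfolding minus_allowed_def
      using assms by (intro ball_cong) auto
  show ?thesis unfolding block_factor_def g h ..
qed

lemma block_factor_upd_other:
  assumes "fst a \<noteq> l"
  shows "block_factor lam k (z(a := x)) l = block_factor lam k z l"
  by (rule block_factor_cong) (use assms in auto)

lemma plus_allowed_upd: "z a = 0 \<Longrightarrow> plus_allowed k (z(a := x)) l j \<Longrightarrow> plus_allowed k z l j"
  unfolding plus_allowed_def by (metis fun_upd_other)

lemma minus_allowed_upd: "z a = 0 \<Longrightarrow> minus_allowed k (z(a := x)) l \<Longrightarrow> minus_allowed k z l"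
  unfolding minus_allowed_def by (metis fun_upd_other)

lemma block_factor_upd_le:
  assumes za: "z a = 0" and lam: "\<And>j. j \<in> {1..k} \<Longrightarrow> lam (l,j) \<ge> 0"
  shows "block_factor lam k (z(a := x)) l y \<le> block_factor lam k z l y"
proof (cases "y = 1")
  case True
  then show ?thesis unfolding block_factor_def
    using plus_allowed_upd[of z a k x l] za lam by (auto intro!: sum_mono mult_left_mono divide_nonneg_nonneg)
next
  case False
  then show ?thesis unfolding block_factor_def using minus_allowed_upd[of z a k x l] za by auto
qed

lemma block_factor_minus: "block_factor lam k z l (-1) = (if minus_allowed k z l then 1 else 0)"
  unfolding block_factor_def by simp

lemma sum_mult_if_eq:
  assumes "j \<in> K" "finite K"
  shows "(\<Sum>j''\<in>K. f j'' * (if j'' = j then 1 else 0)) = (f j :: real)"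
  using assms by (simp add: if_distrib[of "\<lambda>x. f _ * x"] sum.delta cong: if_cong)

lemma block_factor_pin_plus:
  assumes h: "minus_allowed k z i" and j: "j \<in> {1..k}" and za: "z (i,j) = 0"
  shows "block_factor lam k (z((i,j) := 1)) i 1 = lam (i,j) / real k"
    and "block_factor lam k (z((i,j) := 1)) i (-1) = 0"
proof -
  have g: "plus_allowed k (z((i,j) := 1)) i j'' \<longleftrightarrow> j'' = j" for j''
  proof
    assume "plus_allowed k (z((i,j) := 1)) i j''"
    then have "(z((i,j) := 1)) (i,j) = (if j = j'' then 1 else -1)" using j unfolding plus_allowed_def by auto
    then show "j'' = j" by (auto split: if_splits)
  next
    assume "j'' = j"
    then show "plus_allowed k (z((i,j) := 1)) i j''"
        using h unfolding plus_allowed_def minus_allowed_def by auto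
  qed
  show "block_factor lam k (z((i,j) := 1)) i 1 = lam (i,j) / real k"
    unfolding block_factor_def g using sum_mult_if_eq[OF j, of "\<lambda>j''. lam (i,j'') / real k"] by simp
  show "block_factor lam k (z((i,j) := 1)) i (-1) = 0"
    unfolding block_factor_def minus_allowed_def using j by auto
qed

lemma block_factor_pin_minus:
  assumes h: "minus_allowed k z i" and j: "j \<in> {1..k}" and za: "z (i,j) = 0"
  shows "block_factor lam k (z((i,j) := -1)) i 1 = block_factor lam k z i 1 - lam (i,j) / real k"
    and "block_factor lam k (z((i,j) := -1)) i (-1) = 1"
proof -
  have g: "plus_allowed k (z((i,j) := -1)) i j'' \<longleftrightarrow> plus_allowed k z i j'' \<and> j'' \<noteq> j" for j''
  proof
    assume a: "plus_allowed k (z((i,j) := -1)) i j''"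
    then have "(z((i,j) := -1)) (i,j) = (if j = j'' then 1 else -1)" using j unfolding plus_allowed_def by auto
    then have "j'' \<noteq> j" by (auto split: if_splits)
    moreover have "plus_allowed k z i j''" using plus_allowed_upd[OF za a] .
    ultimately show "plus_allowed k z i j'' \<and> j'' \<noteq> j" by simp
  next
    assume "plus_allowed k z i j'' \<and> j'' \<noteq> j"
    then show "plus_allowed k (z((i,j) := -1)) i j''" unfolding plus_allowed_def by auto
  qed
  have gj: "plus_allowed k z i j" using h za unfolding plus_allowed_def minus_allowed_def by auto
  have "block_factor lam k z i 1
      = (\<Sum>j''\<in>{1..k}. lam (i,j'') / real k * (if plus_allowed k z i j'' then 1 else 0))"
    by (simp add: block_factor_def)
  also have "\<dots> = (\<Sum>j''\<in>{1..k}. lam (i,j'') / real k * (if plus_allowed k z i j'' \<and> j'' \<noteq> j then 1 else 0)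
       + lam (i,j'') / real k * (if j'' = j then 1 else 0))"
    using gj by (intro sum.cong) auto
  also have "\<dots> = (\<Sum>j''\<in>{1..k}. lam (i,j'') / real k * (if plus_allowed k z i j'' \<and> j'' \<noteq> j then 1 else 0))
       + (\<Sum>j''\<in>{1..k}. lam (i,j'') / real k * (if j'' = j then 1 else 0))"
    by (rule sum.distrib)
  also have "(\<Sum>j''\<in>{1..k}. lam (i,j'') / real k * (if j'' = j then 1 else 0)) = lam (i,j) / real k"
    using sum_mult_if_eq[OF j, of "\<lambda>j''. lam (i,j'') / real k"] by simp
  finally show "block_factor lam k (z((i,j) := -1)) i 1 = block_factor lam k z i 1 - lam (i,j) / real k"
    unfolding block_factor_def g by simp
  show "block_factor lam k (z((i,j) := -1)) i (-1) = 1"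
    unfolding block_factor_def using h unfolding minus_allowed_def by auto
qed

lemma block_factor_two_plus:
  assumes j: "j \<in> {1..k}" and j': "j' \<in> {1..k}" and jj: "j \<noteq> j'"
  shows "block_factor lam k (z((i,j) := 1, (i,j') := 1)) i 1 = 0"
    and "block_factor lam k (z((i,j) := x, (i,j') := 1)) i (-1) = 0"
proof -
  have "\<not> plus_allowed k (z((i,j) := 1, (i,j') := 1)) i j''" for j''
  proof
    assume a: "plus_allowed k (z((i,j) := 1, (i,j') := 1)) i j''"
    have "(z((i,j) := 1, (i,j') := 1)) (i,j) = (if j = j'' then 1 else -1)"
      using a j unfolding plus_allowed_def by (metis fun_upd_apply zero_neq_one)
    moreover have "(z((i,j) := 1, (i,j') := 1)) (i,j') = (if j' = j'' then 1 else -1)"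
      using a j' unfolding plus_allowed_def by (metis fun_upd_apply zero_neq_one)
    ultimately show False using jj by (auto split: if_splits)
  qed
  then show "block_factor lam k (z((i,j) := 1, (i,j') := 1)) i 1 = 0" unfolding block_factor_def by simp
  show "block_factor lam k (z((i,j) := x, (i,j') := 1)) i (-1) = 0"
    unfolding block_factor_def minus_allowed_def using j' by auto
qed

lemma block_factor_minus_plus:
  assumes h: "minus_allowed k z i" and j: "j \<in> {1..k}" and j': "j' \<in> {1..k}" and jj: "j \<noteq> j'"
    and za: "z (i,j) = 0" and zb: "z (i,j') = 0"
  shows "block_factor lam k (z((i,j) := -1, (i,j') := 1)) i 1 = lam (i,j') / real k"
proof -
  have h2: "minus_allowed k (z((i,j) := -1)) i" using h unfolding minus_allowed_def by auto
  have "(z((i,j) := -1)) (i,j') = 0" using zb jj by auto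
  from block_factor_pin_plus(1)[OF h2 j' this] show ?thesis .
qed

lemma block_factor_pin_plus_dead:
  assumes j: "j \<in> {1..k}" and za: "z (i,j) = 0"
    and vals: "\<And>j'. j' \<in> {1..k} \<Longrightarrow> z (i,j') \<in> {-1, 0, 1}"
    and lam: "\<And>j. j \<in> {1..k} \<Longrightarrow> lam (i,j) \<ge> 0"
    and nd: "block_factor lam k z i 1 = 0 \<or> block_factor lam k z i (-1) = 0"
  shows "block_factor lam k (z((i,j) := 1)) i 1 = 0" and "block_factor lam k (z((i,j) := 1)) i (-1) = 0"
proof -
  show "block_factor lam k (z((i,j) := 1)) i (-1) = 0" unfolding block_factor_def minus_allowed_def
      using j by auto
  show "block_factor lam k (z((i,j) := 1)) i 1 = 0"
  proof (cases "block_factor lam k z i 1 = 0")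
    case True
    have "block_factor lam k (z((i,j) := 1)) i 1 \<le> 0"
        using block_factor_upd_le[of z "(i,j)" k lam i 1 1] za lam True by simp
    moreover have "block_factor lam k (z((i,j) := 1)) i 1 \<ge> 0" by (rule block_factor_nonneg) (rule lam)
    ultimately show ?thesis by simp
  next
    case False
    then have "\<not> minus_allowed k z i" using nd by (auto simp: block_factor_def)
    then obtain j0 where j0: "j0 \<in> {1..k}" "z (i,j0) \<noteq> 0" "z (i,j0) \<noteq> -1" unfolding minus_allowed_def by auto
    then have z1: "z (i,j0) = 1" using vals[OF j0(1)] by auto
    have j0j: "j0 \<noteq> j" using za j0 by auto
    have "\<not> plus_allowed k (z((i,j) := 1)) i j''" for j''
    proof
      assume a: "plus_allowed k (z((i,j) := 1)) i j''"
      have "(z((i,j) := 1)) (i,j) = (if j = j'' then 1 else -1)" using a j unfolding plus_allowed_def by auto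
      moreover have "(z((i,j) := 1)) (i,j0) = (if j0 = j'' then 1 else -1)"
          using a j0 unfolding plus_allowed_def by auto
      ultimately show False using j0j z1 by (auto split: if_splits)
    qed
    then show ?thesis unfolding block_factor_def by simp
  qed
qed

section \<open>Influences and total variation\<close>

lemma prob_split_coord:
  assumes b: "b \<in> N"
  shows "prob N \<nu> (\<lambda>\<sigma>. E \<sigma> \<and> \<sigma> b = 1) + prob N \<nu> (\<lambda>\<sigma>. E \<sigma> \<and> \<sigma> b = -1) = prob N \<nu> E"
  unfolding prob_def sum.distrib[symmetric]
  by (rule sum.cong) (use cube_value[OF _ b] in auto)

lemma prob_eq_0: "(\<And>\<sigma>. \<sigma> \<in> cube N \<Longrightarrow> \<not> E \<sigma>) \<Longrightarrow> prob N \<nu> E = 0"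
  unfolding prob_def by (rule sum.neutral) auto

lemma tv_coord_cond:
  assumes b: "b \<in> N" and p1: "prob N \<nu> E1 \<noteq> 0" and p2: "prob N \<nu> E2 \<noteq> 0"
  shows "tv_coord N (cond N \<nu> E1) (cond N \<nu> E2) b
     = \<bar>prob N \<nu> (\<lambda>\<sigma>. E1 \<sigma> \<and> \<sigma> b = 1) / prob N \<nu> E1 - prob N \<nu> (\<lambda>\<sigma>. E2 \<sigma> \<and> \<sigma> b = 1) / prob N \<nu> E2\<bar>"
proof -
  let ?q1 = "prob N \<nu> (\<lambda>\<sigma>. E1 \<sigma> \<and> \<sigma> b = 1)" and ?q2 = "prob N \<nu> (\<lambda>\<sigma>. E2 \<sigma> \<and> \<sigma> b = 1)"
  let ?r1 = "prob N \<nu> (\<lambda>\<sigma>. E1 \<sigma> \<and> \<sigma> b = -1)" and ?r2 = "prob N \<nu> (\<lambda>\<sigma>. E2 \<sigma> \<and> \<sigma> b = -1)"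
  have s1: "?q1 + ?r1 = prob N \<nu> E1" and s2: "?q2 + ?r2 = prob N \<nu> E2" using prob_split_coord[OF b] by auto
  have "tv_coord N (cond N \<nu> E1) (cond N \<nu> E2) b
      = (1/2) * (\<bar>?r1 / prob N \<nu> E1 - ?r2 / prob N \<nu> E2\<bar> + \<bar>?q1 / prob N \<nu> E1 - ?q2 / prob N \<nu> E2\<bar>)"
    unfolding tv_coord_def prob_cond by simp
  also have "?r1 / prob N \<nu> E1 = 1 - ?q1 / prob N \<nu> E1" using s1 p1 by (simp add: field_simps)
  also have "?r2 / prob N \<nu> E2 = 1 - ?q2 / prob N \<nu> E2" using s2 p2 by (simp add: field_simps)
  finally show ?thesis by (simp add: abs_minus_commute)
qed

lemma tv_coord_nonneg: "tv_coord N \<nu> \<rho> j \<ge> 0"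
  unfolding tv_coord_def by (simp add: sum_nonneg)

lemma tv_coord_commute: "tv_coord N \<nu> \<rho> j = tv_coord N \<rho> \<nu> j"
  unfolding tv_coord_def by (simp add: abs_minus_commute)

lemma supp1_subset: "supp1 N \<nu> a \<subseteq> {-1, 1}" unfolding supp1_def by auto

lemma finite_supp1: "finite (supp1 N \<nu> a)"
  by (rule finite_subset[OF supp1_subset]) simp

lemma Psi_leI:
  assumes ne: "supp1 N \<nu> a \<noteq> {}" and B: "B \<ge> 0"
    and tv: "1 \<in> supp1 N \<nu> a \<Longrightarrow> -1 \<in> supp1 N \<nu> a \<Longrightarrow>
             tv_coord N (cond N \<nu> (\<lambda>\<sigma>. \<sigma> a = 1)) (cond N \<nu> (\<lambda>\<sigma>. \<sigma> a = -1)) b \<le> B"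
  shows "Psi N \<nu> a b \<le> B"
  unfolding Psi_def
proof (rule Max.boundedI)
  show "finite ((\<lambda>(x, y). tv_coord N (cond N \<nu> (\<lambda>\<sigma>. \<sigma> a = x)) (cond N \<nu> (\<lambda>\<sigma>. \<sigma> a = y)) b)
      ` (supp1 N \<nu> a \<times> supp1 N \<nu> a))"
    by (intro finite_imageI finite_cartesian_product finite_supp1)
  show "(\<lambda>(x, y). tv_coord N (cond N \<nu> (\<lambda>\<sigma>. \<sigma> a = x)) (cond N \<nu> (\<lambda>\<sigma>. \<sigma> a = y)) b)
      ` (supp1 N \<nu> a \<times> supp1 N \<nu> a) \<noteq> {}"
    using ne by auto
  fix t assume "t \<in> (\<lambda>(x, y). tv_coord N (cond N \<nu> (\<lambda>\<sigma>. \<sigma> a = x)) (cond N \<nu> (\<lambda>\<sigma>. \<sigma> a = y)) b)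
      ` (supp1 N \<nu> a \<times> supp1 N \<nu> a)"
  then obtain x y where xy: "x \<in> supp1 N \<nu> a" "y \<in> supp1 N \<nu> a"
    and t: "t = tv_coord N (cond N \<nu> (\<lambda>\<sigma>. \<sigma> a = x)) (cond N \<nu> (\<lambda>\<sigma>. \<sigma> a = y)) b" by auto
  have xv: "x \<in> {-1,1}" "y \<in> {-1,1}" using xy supp1_subset[of N \<nu> a] by blast+
  show "t \<le> B"
  proof (cases "x = y")
    case True then show ?thesis using t B by (simp add: tv_coord_def)
  next
    case False
    then have "(x = 1 \<and> y = -1) \<or> (x = -1 \<and> y = 1)" using xv by auto
    then show ?thesis
    proof
      assume "x = 1 \<and> y = -1" then show ?thesis using tv xy t by simp
    next
      assume xy': "x = -1 \<and> y = 1"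
      have "t = tv_coord N (cond N \<nu> (\<lambda>\<sigma>. \<sigma> a = 1)) (cond N \<nu> (\<lambda>\<sigma>. \<sigma> a = -1)) b"
        using t xy' by (subst tv_coord_commute) simp
      then show ?thesis using tv xy xy' by simp
    qed
  qed
qed

lemma Psi_nonneg:
  assumes ne: "supp1 N \<nu> a \<noteq> {}"
  shows "Psi N \<nu> a b \<ge> 0"
proof -
  obtain x where x: "x \<in> supp1 N \<nu> a" using ne by auto
  have fin: "finite ((\<lambda>(x, y). tv_coord N (cond N \<nu> (\<lambda>\<sigma>. \<sigma> a = x)) (cond N \<nu> (\<lambda>\<sigma>. \<sigma> a = y)) b)
      ` (supp1 N \<nu> a \<times> supp1 N \<nu> a))"
    by (intro finite_imageI finite_cartesian_product finite_supp1)
  have "tv_coord N (cond N \<nu> (\<lambda>\<sigma>. \<sigma> a = x)) (cond N \<nu> (\<lambda>\<sigma>. \<sigma> a = x)) b \<le> Psi N \<nu> a b"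
    unfolding Psi_def by (rule Max_ge[OF fin]) (rule image_eqI[of _ _ "(x,x)"], simp, simp add: x)
  moreover have "0 \<le> tv_coord N (cond N \<nu> (\<lambda>\<sigma>. \<sigma> a = x)) (cond N \<nu> (\<lambda>\<sigma>. \<sigma> a = x)) b"
    by (rule tv_coord_nonneg)
  ultimately show ?thesis by linarith
qed

text \<open>This is where the lower bound on \<open>k\<close> enters: a single coordinate carries a field
  \<open>la \<le> m / 10\<close>, while turning its block to \<open>-1\<close> gains at least the factor \<open>m = mu_min_neg N \<mu>\<close>,
  so removing the coordinate changes a normalisation \<open>L u + v\<close> by at most the factor \<open>10 / 9\<close>.\<close>

lemma normalisation_remove_le:
  fixes la m u v L :: real
  assumes la: "10 * la \<le> m" and uv: "m * u \<le> v" and u: "0 \<le> u" and L: "0 \<le> L"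
  shows "9 * (L * u + v) \<le> 10 * ((L - la) * u + v)"
proof -
  have e: "10 * ((L - la) * u + v) = 10 * (L * u) - 10 * (la * u) + 10 * v" by (simp add: algebra_simps)
  have "10 * (la * u) \<le> m * u" using mult_right_mono[OF la u] by (simp add: mult.assoc)
  moreover have "0 \<le> L * u" using L u by simp
  ultimately show ?thesis unfolding e using uv by (smt (verit) distrib_left)
qed

lemma divide_le_ten_ninths:
  fixes x d y L :: real
  assumes "0 < d" "0 < L" "x * (9 * L) \<le> 10 * y * d"
  shows "x / d \<le> 10 / 9 * (y / L)"
proof -
  have "x / d = (x * (9 * L)) / (d * (9 * L))" using assms by simp
  also have "\<dots> \<le> (10 * y * d) / (d * (9 * L))"
    using assms by (intro divide_right_mono) auto
  also have "\<dots> = 10 / 9 * (y / L)" using assms by simp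
  finally show ?thesis .
qed

lemma ratio_difference_eq:
  fixes c s t u v L :: real
  assumes "0 < u" and "0 < L * u + v"
  shows "c * s / u - c * (L * s + t) / (L * u + v) = c * (s * v - u * t) / (u * (L * u + v))"
proof -
  have "c * s / u - c * (L * s + t) / (L * u + v)
      = (c * s * (L * u + v) - c * (L * s + t) * u) / (u * (L * u + v))"
    using assms by (simp add: diff_frac_eq)
  also have "c * s * (L * u + v) - c * (L * s + t) * u = c * (s * v - u * t)"
    by (simp add: algebra_simps)
  finally show ?thesis .
qed

lemma same_block_ratio_bound:
  fixes la lb L u v m A :: real
  assumes la: "10 * la \<le> m" and uv: "m * u \<le> v" and la0: "0 \<le> la" and u: "0 \<le> u" and L: "0 < L"
    and lb: "0 \<le> lb" and A: "0 \<le> A" and d: "0 < (L - la) * u + v"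
  shows "lb * u / ((L - la) * u + v) \<le> 10 / 9 * (lb / L * (A + 1))"
proof -
  have "0 \<le> v" using mult_nonneg_nonneg[of m u] la la0 u uv by linarith
  then have "9 * (L * u) \<le> 10 * ((L - la) * u + v)"
    using normalisation_remove_le[OF la uv u] L by (smt (verit))
  then have "lb * (9 * (L * u)) \<le> lb * (10 * ((L - la) * u + v))"
    by (rule mult_left_mono[OF _ lb])
  then have "lb * u * (9 * L) \<le> 10 * lb * ((L - la) * u + v)"
    by (simp only: mult_ac)
  then have "lb * u / ((L - la) * u + v) \<le> 10 / 9 * (lb / L)"
    by (rule divide_le_ten_ninths[OF d L])
  also have "\<dots> \<le> 10 / 9 * (lb / L * (A + 1))"
    using mult_left_mono[of 1 "A + 1" "lb / L"] lb L A by (intro mult_left_mono) auto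
  finally show ?thesis .
qed

lemma cross_block_ratio_bound:
  fixes la lb L L' s t u v m :: real
  assumes la: "10 * la \<le> m" and uv: "m * u \<le> v" and u: "0 < u" and L: "0 < L" and L': "0 < L'"
    and Lla: "0 \<le> L - la" and la0: "0 < la" and lb: "0 \<le> lb"
  shows "\<bar>la * lb * s / (la * u) - lb * ((L - la) * s + t) / ((L - la) * u + v)\<bar>
      \<le> 10 / 9 * (lb / L' * \<bar>L * L' * s / (L * u) - L' * (L * s + t) / (L * u + v)\<bar>)"
proof -
  define X where "X = s * v - u * t"
  have "0 < 10 * (la * u)" using la0 u by simp
  moreover have "10 * (la * u) \<le> m * u" using mult_right_mono[OF la, of u] u by (simp add: mult.assoc)
  ultimately have v: "0 < v" using uv by linarith
  have d1: "0 < L * u + v" using L u v by (simp add: add_pos_pos)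
  have d2: "0 < (L - la) * u + v" using Lla u v by (simp add: add_nonneg_pos)
  have key: "9 * (L * u + v) \<le> 10 * ((L - la) * u + v)"
    using normalisation_remove_le[OF la uv] u L by simp
  have e1: "la * lb * s / (la * u) - lb * ((L - la) * s + t) / ((L - la) * u + v)
      = lb * X / (u * ((L - la) * u + v))"
    using ratio_difference_eq[OF u d2, of lb s t] la0 unfolding X_def by simp
  have e2: "L * L' * s / (L * u) - L' * (L * s + t) / (L * u + v) = L' * X / (u * (L * u + v))"
    using ratio_difference_eq[OF u d1, of L' s t] L unfolding X_def by (simp add: mult.assoc)
  have "lb * \<bar>X\<bar> * (9 * (u * (L * u + v))) \<le> 10 * (lb * \<bar>X\<bar>) * (u * ((L - la) * u + v))"
    using mult_left_mono[OF key, of "lb * \<bar>X\<bar> * u"] lb u by (simp add: algebra_simps)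
  then have "lb * \<bar>X\<bar> / (u * ((L - la) * u + v)) \<le> 10 / 9 * (lb * \<bar>X\<bar> / (u * (L * u + v)))"
    using u d1 d2 by (intro divide_le_ten_ninths) auto
  then show ?thesis
    unfolding e1 e2 using lb u d1 d2 L' by (simp add: abs_mult abs_divide)
qed

section \<open>Pinnings of the tilted k-transformation\<close>

locale Rd_pinning =
  fixes N :: "'i set" and \<mu> :: "('i \<Rightarrow> int) \<Rightarrow> real" and k :: nat and lam :: "'i \<times> nat \<Rightarrow> real"
    and \<epsilon> \<eta> :: real and \<Lambda> :: "('i \<times> nat) set" and \<tau> :: "'i \<times> nat \<Rightarrow> int"
  assumes dist: "is_dist N \<mu>" and mu_min_pos: "mu_min_neg N \<mu> > 0"
    and eps_pos: "\<epsilon> > 0" and eta_pos: "\<eta> > 0"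
    and k_large: "real k \<ge> 10 * (1 + \<epsilon>) / mu_min_neg N \<mu>"
    and limited_corr: "complete_limited_correlation N \<eta> \<epsilon> \<mu>"
    and lam: "\<And>a. a \<in> N \<times> {1..k} \<Longrightarrow> 0 < lam a \<and> lam a \<le> 1 + \<epsilon>"
    and pinned_subset: "\<Lambda> \<subseteq> N \<times> {1..k}"
    and tau_supp: "\<tau> \<in> supp_marg (N \<times> {1..k}) (tilt (N \<times> {1..k}) lam (Rd N \<mu> k)) \<Lambda>"
begin

abbreviation "I \<equiv> N \<times> {1..k}"
abbreviation "m \<equiv> mu_min_neg N \<mu>"

text \<open>\<open>W z\<close> is the unnormalised weight of the partial configuration \<open>z\<close>, and a block \<open>l\<close> is free
  when the pinning \<open>\<tau>\<close> still allows both values of the underlying spin \<open>X l\<close>.\<close>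

definition "W z = factor_sum N \<mu> (block_factor lam k z)"
definition "\<Phi> = block_factor lam k \<tau>"
definition "Free = {l\<in>N. \<Phi> l 1 > 0 \<and> \<Phi> l (-1) > 0}"
definition "\<nu> = pin I (tilt I lam (Rd N \<mu> k)) \<Lambda> \<tau>"
abbreviation "Wr E \<equiv> tilt_weight I lam (Rd N \<mu> k) E"

lemma N: "finite N" using dist by (simp add: is_dist_def)
lemma mu_nonneg: "\<mu> X \<ge> 0" using dist by (simp add: is_dist_def)
lemma mu_outside: "X \<notin> cube N \<Longrightarrow> \<mu> X = 0" using dist by (simp add: is_dist_def)
lemma finite_I: "finite I" using N by simp

lemma k_pos: "k > 0"
proof -
  have "10 * (1 + \<epsilon>) / m > 0" using eps_pos mu_min_pos by simp
  then show ?thesis using k_large by (metis gr0I of_nat_0 order.strict_trans2 less_irrefl)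
qed

lemma lam_div_k_small: "a \<in> I \<Longrightarrow> 10 * (lam a / real k) \<le> m"
proof -
  assume a: "a \<in> I"
  have "10 * (1 + \<epsilon>) \<le> real k * m" using k_large mu_min_pos by (simp add: divide_le_eq mult.commute)
  moreover have "lam a \<le> 1 + \<epsilon>" using lam[OF a] by simp
  moreover have "10 * lam a \<le> 10 * (1 + \<epsilon>)" using lam[OF a] by simp
  ultimately have "10 * lam a \<le> real k * m" by linarith
  then show ?thesis using k_pos by (simp add: field_simps)
qed

lemma lam_nonneg: "j \<in> {1..k} \<Longrightarrow> l \<in> N \<Longrightarrow> lam (l,j) \<ge> 0"
  using lam[of "(l,j)"] by auto

lemma Wr_agrees_with: "Wr (agrees_with I z) = W z"
  unfolding W_def using tilt_weight_Rd_agrees_with[of N \<mu> k lam z] N mu_outside by blast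

lemma W_nonneg: "W z \<ge> 0"
  unfolding W_def by (rule factor_sum_nonneg[OF mu_nonneg]) (auto intro: block_factor_nonneg lam_nonneg)

lemma tau_in_cube: "\<tau> \<in> cube \<Lambda>" using tau_supp by (simp add: supp_marg_def)
lemma tau_outside: "a \<notin> \<Lambda> \<Longrightarrow> \<tau> a = 0" using cube_outside[OF tau_in_cube] .
lemma tau_range: "\<tau> a \<in> {-1, 0, 1}"
  using cube_outside[OF tau_in_cube, of a] cube_value[OF tau_in_cube, of a] by (cases "a \<in> \<Lambda>") auto

lemma Wr_pinned: "Wr (\<lambda>Y. restr Y \<Lambda> = \<tau>) = W \<tau>"
proof -
  have "Wr (\<lambda>Y. restr Y \<Lambda> = \<tau>) = Wr (agrees_with I \<tau>)"
    by (rule tilt_weight_cong) (rule restr_eq_iff_agrees_with[OF tau_in_cube pinned_subset])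
  then show ?thesis using Wr_agrees_with by simp
qed

lemma Wr_nonneg: "Wr E \<ge> 0"
  by (rule tilt_weight_nonneg) (use Rd_nonneg[OF mu_nonneg] lam in \<open>auto simp: less_imp_le\<close>)

lemma W_tau_pos: "W \<tau> > 0" and Wr_total_ne_0: "Wr (\<lambda>_. True) \<noteq> 0"
proof -
  have "marg I (tilt I lam (Rd N \<mu> k)) \<Lambda> \<tau> > 0" using tau_supp by (simp add: supp_marg_def)
  then have "Wr (\<lambda>Y. restr Y \<Lambda> = \<tau>) / Wr (\<lambda>_. True) > 0" unfolding marg_def prob_tilt .
  then have "W \<tau> / Wr (\<lambda>_. True) > 0" unfolding Wr_pinned .
  then show "W \<tau> > 0" "Wr (\<lambda>_. True) \<noteq> 0" using Wr_nonneg[of "\<lambda>_. True"] W_nonneg[of \<tau>]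
    by (auto simp: zero_less_divide_iff)
qed

lemma prob_nu: "prob I \<nu> E = Wr (\<lambda>Y. restr Y \<Lambda> = \<tau> \<and> E Y) / W \<tau>"
  unfolding \<nu>_def prob_pin_tilt[OF Wr_total_ne_0] Wr_pinned ..

lemma prob_nu_upd:
  assumes a: "a \<in> I - \<Lambda>" and x: "x \<noteq> 0"
  shows "prob I \<nu> (\<lambda>Y. Y a = x) = W (\<tau>(a := x)) / W \<tau>"
proof -
  have "Wr (\<lambda>Y. restr Y \<Lambda> = \<tau> \<and> Y a = x) = Wr (agrees_with I (\<tau>(a := x)))"
    by (rule tilt_weight_cong) (rule restr_eq_upd_iff[OF tau_in_cube pinned_subset a x])
  then have "Wr (\<lambda>Y. restr Y \<Lambda> = \<tau> \<and> Y a = x) = W (\<tau>(a := x))" unfolding Wr_agrees_with .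
  then show ?thesis unfolding prob_nu by simp
qed

lemma prob_cond_nu_upd2:
  assumes a: "a \<in> I - \<Lambda>" and x: "x \<noteq> 0" and b: "b \<in> I - \<Lambda>" and y: "y \<noteq> 0" and ab: "a \<noteq> b"
  shows "prob I (cond I \<nu> (\<lambda>Y. Y a = x)) (\<lambda>Y. Y b = y) = W (\<tau>(a := x, b := y)) / W (\<tau>(a := x))"
proof -
  have "Wr (\<lambda>Y. restr Y \<Lambda> = \<tau> \<and> Y a = x \<and> Y b = y) = Wr (agrees_with I (\<tau>(a := x, b := y)))"
    by (rule tilt_weight_cong) (rule restr_eq_upd2_iff[OF tau_in_cube pinned_subset a x b y ab])
  then have e1: "Wr (\<lambda>Y. restr Y \<Lambda> = \<tau> \<and> Y a = x \<and> Y b = y) = W (\<tau>(a := x, b := y))" unfolding Wr_agrees_with .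
  have "Wr (\<lambda>Y. restr Y \<Lambda> = \<tau> \<and> Y a = x) = Wr (agrees_with I (\<tau>(a := x)))"
    by (rule tilt_weight_cong) (rule restr_eq_upd_iff[OF tau_in_cube pinned_subset a x])
  then have e2: "Wr (\<lambda>Y. restr Y \<Lambda> = \<tau> \<and> Y a = x) = W (\<tau>(a := x))" unfolding Wr_agrees_with .
  have R: "Wr (\<lambda>Y. restr Y \<Lambda> = \<tau>) \<noteq> 0" using Wr_pinned W_tau_pos by simp
  show ?thesis unfolding \<nu>_def prob_cond_pin_tilt[OF Wr_total_ne_0 R] e1 e2 ..
qed

lemma prob_nu_total: "prob I \<nu> (\<lambda>_. True) = 1"
  unfolding prob_nu using Wr_pinned W_tau_pos by simp

lemma supp1_nu_nonempty: "a \<in> I \<Longrightarrow> supp1 I \<nu> a \<noteq> {}"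
proof
  assume a: "a \<in> I" and e: "supp1 I \<nu> a = {}"
  have "prob I \<nu> (\<lambda>Y. True \<and> Y a = 1) + prob I \<nu> (\<lambda>Y. True \<and> Y a = -1) = 1"
    using prob_split_coord[OF a, of \<nu> "\<lambda>_. True"] prob_nu_total by simp
  moreover have "prob I \<nu> (\<lambda>Y. Y a = 1) \<le> 0" "prob I \<nu> (\<lambda>Y. Y a = -1) \<le> 0"
    using e unfolding supp1_def by (auto simp: not_less)
  ultimately show False by simp
qed

lemma mem_supp1_nu_iff:
  assumes a: "a \<in> I - \<Lambda>" and x: "x \<in> {-1, 1}"
  shows "x \<in> supp1 I \<nu> a \<longleftrightarrow> W (\<tau>(a := x)) > 0"
  using x prob_nu_upd[OF a, of x] W_tau_pos unfolding supp1_def by (auto simp: zero_less_divide_iff)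

lemma Phi_nonneg: "l \<in> N \<Longrightarrow> \<Phi> l x \<ge> 0"
  unfolding \<Phi>_def by (rule block_factor_nonneg) (rule lam_nonneg)

lemma Phi_minus: "\<Phi> l (-1) = (if minus_allowed k \<tau> l then 1 else 0)"
  unfolding \<Phi>_def by (rule block_factor_minus)

lemma Free_subset: "Free \<subseteq> N" unfolding Free_def by auto

lemma Free_minus_allowed: "l \<in> Free \<Longrightarrow> minus_allowed k \<tau> l" and Phi_Free_minus: "l \<in> Free \<Longrightarrow> \<Phi> l (-1) = 1"
  unfolding Free_def using Phi_minus by (auto split: if_splits)

lemma W_tau_eq: "W \<tau> = factor_sum N \<mu> \<Phi>" unfolding W_def \<Phi>_def ..

definition "Wplus i = factor_sum N \<mu> (\<Phi>(i := delta 1))"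
definition "Wminus i = factor_sum N \<mu> (\<Phi>(i := delta (-1)))"
definition "Q i i' f g = factor_sum N \<mu> (\<Phi>(i := f, i' := g))"

lemma W_split:
  assumes i: "i \<in> N" and z: "\<And>l. l \<noteq> i \<Longrightarrow> block_factor lam k z l = \<Phi> l"
  shows "W z = block_factor lam k z i 1 * Wplus i + block_factor lam k z i (-1) * Wminus i"
proof -
  have e: "(block_factor lam k z)(i := d) = \<Phi>(i := d)" for d using z by (intro ext) auto
  show ?thesis unfolding W_def Wplus_def Wminus_def
      using factor_sum_split[OF N i, of \<mu> "block_factor lam k z"] e by simp
qed

lemma Wplus_le_Wminus: "i \<in> N \<Longrightarrow> m * Wplus i \<le> Wminus i"
  unfolding Wplus_def Wminus_def
  by (rule factor_sum_flip_le[OF N _ mu_nonneg]) (auto intro: Phi_nonneg mu_min_neg_mult_le_flip[OF dist])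

lemma Wplus_nonneg: "Wplus i \<ge> 0" and Wminus_nonneg: "Wminus i \<ge> 0"
  unfolding Wplus_def Wminus_def
      by (rule factor_sum_nonneg[OF mu_nonneg], auto simp: delta_def intro: Phi_nonneg)+

lemma W_eq_Q:
  assumes ii: "i \<noteq> i'" and z: "\<And>l. l \<noteq> i \<Longrightarrow> l \<noteq> i' \<Longrightarrow> block_factor lam k z l = \<Phi> l"
  shows "W z = Q i i' (block_factor lam k z i) (block_factor lam k z i')"
proof -
  have "block_factor lam k z = \<Phi>(i := block_factor lam k z i, i' := block_factor lam k z i')"
      using z ii by (intro ext) auto
  then show ?thesis unfolding W_def Q_def by simp
qed

lemma Q_split_fst:
  assumes ii: "i \<noteq> i'" and i: "i \<in> N"
  shows "Q i i' f g = f 1 * Q i i' (delta 1) g + f (-1) * Q i i' (delta (-1)) g"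
proof -
  have e: "(\<Phi>(i := f, i' := g))(i := d) = \<Phi>(i := d, i' := g)" for d using ii by (intro ext) auto
  have f: "(\<Phi>(i := f, i' := g)) i = f" using ii by simp
  show ?thesis unfolding Q_def using factor_sum_split[OF N i, of \<mu> "\<Phi>(i := f, i' := g)"] e f by simp
qed

lemma Q_split_snd:
  assumes ii: "i \<noteq> i'" and i': "i' \<in> N"
  shows "Q i i' f g = g 1 * Q i i' f (delta 1) + g (-1) * Q i i' f (delta (-1))"
proof -
  have e: "(\<Phi>(i := f, i' := g))(i' := d) = \<Phi>(i := f, i' := d)" for d by (intro ext) auto
  show ?thesis unfolding Q_def using factor_sum_split[OF N i', of \<mu> "\<Phi>(i := f, i' := g)"] e by simp
qed

lemma Q_Wplus: "i \<noteq> i' \<Longrightarrow> Q i i' (delta 1) (\<Phi> i') = Wplus i"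
  and Q_Wminus: "i \<noteq> i' \<Longrightarrow> Q i i' (delta (-1)) (\<Phi> i') = Wminus i"
proof -
  assume ii: "i \<noteq> i'"
  have "\<Phi>(i := d, i' := \<Phi> i') = \<Phi>(i := d)" for d using ii by (intro ext) auto
  then show "Q i i' (delta 1) (\<Phi> i') = Wplus i" "Q i i' (delta (-1)) (\<Phi> i') = Wminus i"
    unfolding Q_def Wplus_def Wminus_def by simp_all
qed

text \<open>On the free blocks, the pinned k-transformation is governed by \<open>\<nu>'\<close>: the tilt of \<open>\<mu>\<close> by the
  block fields \<open>lam' l = \<Phi> l 1 \<le> 1 + \<epsilon>\<close>, pinned outside the free blocks to the only value
  \<open>\<tau>'\<close> that \<open>\<tau>\<close> allows there.  Its correlations are controlled by the hypothesis on \<open>\<mu>\<close>.\<close>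

definition "lam' l = (if l \<in> Free then \<Phi> l 1 else 1)"
definition "\<tau>' l = (if l \<in> N \<and> l \<notin> Free then (if \<Phi> l 1 > 0 then 1 else -1) else (0::int))"
definition "\<nu>' = pin N (tilt N lam' \<mu>) (N - Free) \<tau>'"
definition "scale l = (if l \<in> Free then 1 else \<Phi> l (\<tau>' l))"
definition "Phi_pinned w = (\<lambda>l x. if l \<in> Free then allows (w l) x * \<Phi> l x else \<Phi> l x)"
definition "scale_prod = (\<Prod>l\<in>N. scale l)"
abbreviation "Wp E \<equiv> tilt_weight N lam' \<mu> E"

lemma Phi_not_Free: "l \<in> N \<Longrightarrow> l \<notin> Free \<Longrightarrow> \<Phi> l 1 = 0 \<or> \<Phi> l (-1) = 0"
  unfolding Free_def using Phi_nonneg[of l 1] Phi_nonneg[of l "-1"] by auto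

lemma scale_pos: "l \<in> N \<Longrightarrow> scale l > 0"
proof -
  assume l: "l \<in> N"
  show "scale l > 0"
  proof (cases "l \<in> Free")
    case True then show ?thesis by (simp add: scale_def)
  next
    case False
    show ?thesis
    proof (cases "\<Phi> l 1 > 0")
      case True then show ?thesis using False l by (simp add: scale_def \<tau>'_def)
    next
      case F2: False
      then have z1: "\<Phi> l 1 = 0" using Phi_nonneg[OF l, of 1] by simp
      have "\<Phi> l (-1) \<noteq> 0"
      proof
        assume "\<Phi> l (-1) = 0"
        then have "factor_sum N \<mu> \<Phi> = 0" using factor_sum_eq_0[OF N l, of \<Phi> \<mu>] z1 by simp
        then show False using W_tau_pos W_tau_eq by simp
      qed
      then show ?thesis using Phi_nonneg[OF l, of "-1"] F2 False l by (simp add: scale_def \<tau>'_def)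
    qed
  qed
qed

lemma scale_prod_pos: "scale_prod > 0" unfolding scale_prod_def using scale_pos by (simp add: prod_pos)

lemma Phi_pinned_scale:
  assumes w: "\<And>l. l \<in> N - Free \<Longrightarrow> w l = \<tau>' l" and l: "l \<in> N" and x: "x \<in> {-1, 1}"
  shows "Phi_pinned w l x = scale l * (allows (w l) x * (if x = 1 then lam' l else 1))"
proof (cases "l \<in> Free")
  case True
  then show ?thesis using x Phi_Free_minus[OF True] by (auto simp: Phi_pinned_def scale_def lam'_def allows_def)
next
  case False
  have wl: "w l = \<tau>' l" using w l False by simp
  show ?thesis
  proof (cases "\<Phi> l 1 > 0")
    case True
    then have "\<Phi> l (-1) = 0" using Phi_not_Free[OF l False] by auto
    then show ?thesis using True False l x wl
        by (auto simp: Phi_pinned_def scale_def lam'_def \<tau>'_def allows_def)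
  next
    case F2: False
    then have "\<Phi> l 1 = 0" using Phi_nonneg[OF l, of 1] by simp
    then show ?thesis using F2 False l x wl by (auto simp: Phi_pinned_def scale_def lam'_def \<tau>'_def allows_def)
  qed
qed

lemma Wp_agrees_with:
  assumes w: "\<And>l. l \<in> N - Free \<Longrightarrow> w l = \<tau>' l"
  shows "Wp (agrees_with N w) = factor_sum N \<mu> (Phi_pinned w) / scale_prod"
proof -
  have "factor_sum N \<mu> (Phi_pinned w)
      = scale_prod * factor_sum N \<mu> (\<lambda>l x. allows (w l) x * (if x = 1 then lam' l else 1))"
    unfolding scale_prod_def by (rule factor_sum_scale) (rule Phi_pinned_scale[OF w])
  then show ?thesis unfolding tilt_weight_agrees_with[OF N] using scale_prod_pos by simp
qed

lemma tau'_in_cube: "\<tau>' \<in> cube (N - Free)"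
  unfolding cube_def \<tau>'_def by auto

lemma tau'_Free: "l \<in> Free \<Longrightarrow> \<tau>' l = 0" unfolding \<tau>'_def by auto

lemma Phi_pinned_tau': "factor_sum N \<mu> (Phi_pinned \<tau>') = W \<tau>"
  unfolding W_tau_eq by (rule factor_sum_cong) (auto simp: Phi_pinned_def tau'_Free allows_def)

lemma Wp_pinned: "Wp (\<lambda>X. restr X (N - Free) = \<tau>') = W \<tau> / scale_prod"
proof -
  have "Wp (\<lambda>X. restr X (N - Free) = \<tau>') = Wp (agrees_with N \<tau>')"
    by (rule tilt_weight_cong) (rule restr_eq_iff_agrees_with[OF tau'_in_cube], auto)
  then show ?thesis unfolding Wp_agrees_with[OF refl] Phi_pinned_tau' .
qed

lemma lam'_range: "l \<in> N \<Longrightarrow> 0 < lam' l \<and> lam' l \<le> 1 + \<epsilon>"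
proof -
  assume l: "l \<in> N"
  show ?thesis
  proof (cases "l \<in> Free")
    case False then show ?thesis using eps_pos by (simp add: lam'_def)
  next
    case True
    have "\<Phi> l 1 = (\<Sum>j\<in>{1..k}. lam (l,j) / real k * (if plus_allowed k \<tau> l j then 1 else 0))"
      by (simp add: \<Phi>_def block_factor_def)
    also have "\<dots> \<le> (\<Sum>j\<in>{1..k}. (1 + \<epsilon>) / real k)"
    proof (rule sum_mono)
      fix j assume j: "j \<in> {1..k}"
      have "lam (l,j) / real k \<le> (1 + \<epsilon>) / real k"
          using lam[of "(l,j)"] l j k_pos by (simp add: divide_right_mono)
      moreover have "lam (l,j) / real k \<ge> 0" using lam_nonneg[OF j l] by simp
      ultimately show "lam (l,j) / real k * (if plus_allowed k \<tau> l j then 1 else 0) \<le> (1 + \<epsilon>) / real k"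
          using eps_pos
        by (auto simp: divide_nonneg_pos)
    qed
    also have "\<dots> = 1 + \<epsilon>" using k_pos by simp
    finally show ?thesis using True by (simp add: lam'_def Free_def)
  qed
qed

lemma Wp_pinned_pos: "Wp (\<lambda>X. restr X (N - Free) = \<tau>') > 0"
  unfolding Wp_pinned using W_tau_pos scale_prod_pos by simp

lemma Wp_total_pos: "Wp (\<lambda>_. True) > 0"
proof -
  have "Wp (\<lambda>X. restr X (N - Free) = \<tau>') \<le> Wp (\<lambda>_. True)"
    by (rule tilt_weight_mono) (use mu_nonneg lam'_range in \<open>auto simp: less_imp_le\<close>)
  then show ?thesis using Wp_pinned_pos by simp
qed

lemma tau'_supp_marg: "\<tau>' \<in> supp_marg N (tilt N lam' \<mu>) (N - Free)"
  unfolding supp_marg_def marg_def prob_tilt using tau'_in_cube Wp_pinned_pos Wp_total_pos by simp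

lemma spec_radius_PsiAbsCor_le: "spec_radius Free (PsiAbsCor N \<nu>') \<le> \<eta>"
proof -
  have "limited_correlation N \<eta> (tilt N lam' \<mu>)"
      using limited_corr lam'_range unfolding complete_limited_correlation_def by blast
  then have "spec_radius (N - (N - Free)) (PsiAbsCor N \<nu>') \<le> \<eta>"
    unfolding limited_correlation_def \<nu>'_def using tau'_supp_marg by blast
  moreover have "N - (N - Free) = Free" using Free_subset by auto
  ultimately show ?thesis by simp
qed

lemma Phi_pinned_Q:
  assumes ii: "i \<noteq> i'" and i: "i \<in> Free" and i': "i' \<in> Free" and w: "\<And>l. l \<noteq> i \<Longrightarrow> l \<noteq> i' \<Longrightarrow> w l = \<tau>' l"
  shows "factor_sum N \<mu> (Phi_pinned w) = Q i i' (\<lambda>y. allows (w i) y * \<Phi> i y) (\<lambda>y. allows (w i') y * \<Phi> i' y)"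
  unfolding Q_def
proof (rule factor_sum_cong)
  fix l and x :: int assume l: "l \<in> N" and x: "x \<in> {-1, 1}"
  show "Phi_pinned w l x = (\<Phi>(i := \<lambda>y. allows (w i) y * \<Phi> i y, i' := \<lambda>y. allows (w i') y * \<Phi> i' y)) l x"
  proof (cases "l = i \<or> l = i'")
    case True then show ?thesis using i i' ii by (auto simp: Phi_pinned_def)
  next
    case False
    then show ?thesis using w[of l] tau'_Free[of l] by (auto simp: Phi_pinned_def allows_def)
  qed
qed

lemma Wp_pinned_upd:
  assumes ii: "i \<noteq> i'" and i: "i \<in> Free" and i': "i' \<in> Free" and x: "x \<noteq> 0"
  shows "Wp (\<lambda>X. restr X (N - Free) = \<tau>' \<and> X i = x) = Q i i' (\<lambda>y. allows x y * \<Phi> i y) (\<Phi> i') / scale_prod"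
proof -
  have "Wp (\<lambda>X. restr X (N - Free) = \<tau>' \<and> X i = x) = Wp (agrees_with N (\<tau>'(i := x)))"
    by (rule tilt_weight_cong) (rule restr_eq_upd_iff[OF tau'_in_cube], use i Free_subset x in auto)
  also have "\<dots> = factor_sum N \<mu> (Phi_pinned (\<tau>'(i := x))) / scale_prod" by (rule Wp_agrees_with) (use i in auto)
  also have "factor_sum N \<mu> (Phi_pinned (\<tau>'(i := x)))
      = Q i i' (\<lambda>y. allows x y * \<Phi> i y) (\<lambda>y. allows (\<tau>' i') y * \<Phi> i' y)"
    using Phi_pinned_Q[OF ii i i', of "\<tau>'(i := x)"] ii by simp
  also have "(\<lambda>y. allows (\<tau>' i') y * \<Phi> i' y) = \<Phi> i'" using tau'_Free[OF i'] by (simp add: allows_0)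
  finally show ?thesis .
qed

lemma Wp_pinned_upd':
  assumes ii: "i \<noteq> i'" and i: "i \<in> Free" and i': "i' \<in> Free" and x: "x \<noteq> 0"
  shows "Wp (\<lambda>X. restr X (N - Free) = \<tau>' \<and> X i' = x) = Q i i' (\<Phi> i) (\<lambda>y. allows x y * \<Phi> i' y) / scale_prod"
proof -
  have "Wp (\<lambda>X. restr X (N - Free) = \<tau>' \<and> X i' = x) = Wp (agrees_with N (\<tau>'(i' := x)))"
    by (rule tilt_weight_cong) (rule restr_eq_upd_iff[OF tau'_in_cube], use i' Free_subset x in auto)
  also have "\<dots> = factor_sum N \<mu> (Phi_pinned (\<tau>'(i' := x))) / scale_prod"
      by (rule Wp_agrees_with) (use i' in auto)
  also have "factor_sum N \<mu> (Phi_pinned (\<tau>'(i' := x)))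
      = Q i i' (\<lambda>y. allows (\<tau>' i) y * \<Phi> i y) (\<lambda>y. allows x y * \<Phi> i' y)"
    using Phi_pinned_Q[OF ii i i', of "\<tau>'(i' := x)"] ii by simp
  also have "(\<lambda>y. allows (\<tau>' i) y * \<Phi> i y) = \<Phi> i" using tau'_Free[OF i] by (simp add: allows_0)
  finally show ?thesis .
qed

lemma Wp_pinned_upd2:
  assumes ii: "i \<noteq> i'" and i: "i \<in> Free" and i': "i' \<in> Free" and x: "x \<noteq> 0" and y: "y \<noteq> 0"
  shows "Wp (\<lambda>X. restr X (N - Free) = \<tau>' \<and> X i = x \<and> X i' = y)
      = Q i i' (\<lambda>z. allows x z * \<Phi> i z) (\<lambda>z. allows y z * \<Phi> i' z) / scale_prod"
proof -
  have "Wp (\<lambda>X. restr X (N - Free) = \<tau>' \<and> X i = x \<and> X i' = y) = Wp (agrees_with N (\<tau>'(i := x, i' := y)))"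
    by (rule tilt_weight_cong) (rule restr_eq_upd2_iff[OF tau'_in_cube], use i i' ii Free_subset x y in auto)
  also have "\<dots> = factor_sum N \<mu> (Phi_pinned (\<tau>'(i := x, i' := y))) / scale_prod"
      by (rule Wp_agrees_with) (use i i' in auto)
  also have "factor_sum N \<mu> (Phi_pinned (\<tau>'(i := x, i' := y)))
      = Q i i' (\<lambda>z. allows x z * \<Phi> i z) (\<lambda>z. allows y z * \<Phi> i' z)"
    using Phi_pinned_Q[OF ii i i', of "\<tau>'(i := x, i' := y)"] ii by simp
  finally show ?thesis .
qed

lemma Wp_pinned_ne_0: "Wp (\<lambda>X. restr X (N - Free) = \<tau>') \<noteq> 0" using Wp_pinned_pos by simp
lemma Wp_total_ne_0: "tilt_weight N lam' \<mu> (\<lambda>_. True) \<noteq> 0" using Wp_total_pos by simp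

lemma PsiAbsCor_eq:
  assumes ii: "i \<noteq> i'" and i: "i \<in> Free" and i': "i' \<in> Free"
    and pos: "Q i i' (\<lambda>y. allows 1 y * \<Phi> i y) (\<Phi> i') > 0"
  shows "PsiAbsCor N \<nu>' i i'
      = \<bar>Q i i' (\<lambda>z. allows 1 z * \<Phi> i z) (\<lambda>z. allows 1 z * \<Phi> i' z) / Q i i' (\<lambda>y. allows 1 y * \<Phi> i y) (\<Phi> i')
                                 - Q i i' (\<Phi> i) (\<lambda>y. allows 1 y * \<Phi> i' y) / W \<tau>\<bar>"
proof -
  have p1: "prob N \<nu>' (\<lambda>X. X i = 1) = Q i i' (\<lambda>y. allows 1 y * \<Phi> i y) (\<Phi> i') / W \<tau>"
    unfolding \<nu>'_def prob_pin_tilt[OF Wp_total_ne_0] Wp_pinned_upd[OF ii i i' one_neq_zero] Wp_pinned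
        using scale_prod_pos by simp
  have p2: "prob N \<nu>' (\<lambda>X. X i' = 1) = Q i i' (\<Phi> i) (\<lambda>y. allows 1 y * \<Phi> i' y) / W \<tau>"
    unfolding \<nu>'_def prob_pin_tilt[OF Wp_total_ne_0] Wp_pinned_upd'[OF ii i i' one_neq_zero] Wp_pinned
        using scale_prod_pos by simp
  have p3: "prob N (cond N \<nu>' (\<lambda>X. X i = 1)) (\<lambda>X. X i' = 1)
       = Q i i' (\<lambda>z. allows 1 z * \<Phi> i z) (\<lambda>z. allows 1 z * \<Phi> i' z) / Q i i' (\<lambda>y. allows 1 y * \<Phi> i y) (\<Phi> i')"
    unfolding \<nu>'_def prob_cond_pin_tilt[OF Wp_total_ne_0 Wp_pinned_ne_0] Wp_pinned_upd[OF ii i i' one_neq_zero]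
        Wp_pinned_upd2[OF ii i i' one_neq_zero one_neq_zero] using scale_prod_pos by simp
  have "1 \<in> supp1 N \<nu>' i" unfolding supp1_def using p1 pos W_tau_pos by simp
  then show ?thesis unfolding PsiAbsCor_def PsiCor_def using ii p2 p3 by simp
qed

definition "\<pi> b = (lam b / real k) / \<Phi> (fst b) 1"
definition "A = PsiAbsCor N \<nu>'"
definition "Bound a b = of_bool (a = b) + 10/9 * (if fst a \<in> Free \<and> fst b \<in> Free
    then \<pi> b * (A (fst a) (fst b) + of_bool (fst a = fst b)) else 0)"

lemma A_nonneg: "A i i' \<ge> 0" unfolding A_def PsiAbsCor_def by simp

lemma \<pi>_nonneg: "b \<in> I \<Longrightarrow> \<pi> b \<ge> 0"
  unfolding \<pi>_def using lam[of b] Phi_nonneg[of "fst b" 1] by (auto intro!: divide_nonneg_nonneg)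

lemma Bound_nonneg: "b \<in> I \<Longrightarrow> Bound a b \<ge> 0"
  unfolding Bound_def using \<pi>_nonneg[of b] A_nonneg by (auto intro!: mult_nonneg_nonneg add_nonneg_nonneg)

lemma free_coordE:
  assumes "a \<in> I - \<Lambda>"
  obtains i j where "a = (i,j)" "i \<in> N" "j \<in> {1..k}" "\<tau> (i,j) = 0"
  using assms tau_outside by (cases a) auto

lemma block_factor_dead:
  assumes a: "a \<in> I - \<Lambda>" and nD: "fst a \<notin> Free"
  shows "block_factor lam k (\<tau>(a := 1)) (fst a) 1 = 0" "block_factor lam k (\<tau>(a := 1)) (fst a) (-1) = 0"
proof -
  obtain i j where ij: "a = (i,j)" "i \<in> N" "j \<in> {1..k}" "\<tau> (i,j) = 0" using free_coordE[OF a] by blast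
  have nd: "block_factor lam k \<tau> i 1 = 0 \<or> block_factor lam k \<tau> i (-1) = 0"
      using Phi_not_Free[of i] ij nD unfolding \<Phi>_def by simp
  from block_factor_pin_plus_dead[of j k \<tau> i lam, OF ij(3) ij(4) tau_range _ nd] lam_nonneg ij
  show "block_factor lam k (\<tau>(a := 1)) (fst a) 1 = 0" "block_factor lam k (\<tau>(a := 1)) (fst a) (-1) = 0" by auto
qed

lemma W_dead:
  assumes a: "a \<in> I - \<Lambda>" and nD: "fst a \<notin> Free"
  shows "W (\<tau>(a := 1)) = 0"
  unfolding W_def by (rule factor_sum_eq_0[OF N, of "fst a"]) (use a block_factor_dead[OF a nD] in auto)

lemma W_dead2:
  assumes a: "a \<in> I - \<Lambda>" and b: "b \<in> I - \<Lambda>" and ab: "a \<noteq> b" and nD: "fst b \<notin> Free"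
  shows "W (\<tau>(a := x, b := 1)) = 0"
proof -
  have tw: "\<tau>(a := x, b := 1) = (\<tau>(b := 1))(a := x)" using ab by (rule fun_upd_twist)
  have ta: "(\<tau>(b := 1)) a = 0" using a ab tau_outside by auto
  have bN: "fst b \<in> N" using b by auto
  have lnn: "\<And>j. j \<in> {1..k} \<Longrightarrow> lam (fst b, j) \<ge> 0" using lam_nonneg bN by blast
  have z: "block_factor lam k (\<tau>(a := x, b := 1)) (fst b) y = 0" if y: "y \<in> {1, -1}" for y
  proof -
    have "block_factor lam k (\<tau>(a := x, b := 1)) (fst b) y \<le> block_factor lam k (\<tau>(b := 1)) (fst b) y"
      unfolding tw by (rule block_factor_upd_le[of "\<tau>(b := 1)" a k lam "fst b" x y, OF ta lnn])
    moreover have "block_factor lam k (\<tau>(b := 1)) (fst b) y = 0" using block_factor_dead[OF b nD] y by auto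
    moreover have "block_factor lam k (\<tau>(a := x, b := 1)) (fst b) y \<ge> 0"
        by (rule block_factor_nonneg) (rule lnn)
    ultimately show ?thesis by linarith
  qed
  show ?thesis unfolding W_def by (rule factor_sum_eq_0[OF N bN]) (use z in auto)
qed

lemma Psi_diag_le:
  assumes a: "a \<in> I - \<Lambda>"
  shows "Psi I \<nu> a a \<le> 1"
proof (rule Psi_leI[OF supp1_nu_nonempty])
  show "a \<in> I" using a by simp
  assume s1: "1 \<in> supp1 I \<nu> a" and s2: "-1 \<in> supp1 I \<nu> a"
  have p1: "prob I \<nu> (\<lambda>Y. Y a = 1) > 0" and p2: "prob I \<nu> (\<lambda>Y. Y a = -1) > 0"
    using s1 s2 unfolding supp1_def by auto
  have aI: "a \<in> I" using a by simp
  have e1: "prob I \<nu> (\<lambda>Y. Y a = 1 \<and> Y a = 1) = prob I \<nu> (\<lambda>Y. Y a = 1)" by (rule prob_cong) auto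
  have e2: "prob I \<nu> (\<lambda>Y. Y a = -1 \<and> Y a = 1) = 0" by (rule prob_eq_0) auto
  show "tv_coord I (cond I \<nu> (\<lambda>\<sigma>. \<sigma> a = 1)) (cond I \<nu> (\<lambda>\<sigma>. \<sigma> a = -1)) a \<le> 1"
    unfolding tv_coord_cond[OF aI p1[THEN less_imp_neq, symmetric] p2[THEN less_imp_neq, symmetric]] e1 e2
    using p1 a by simp
qed simp

lemma W_pin_free_block:
  assumes i: "i \<in> Free" and j: "j \<in> {1..k}" and \<tau>j: "\<tau> (i, j) = 0"
  shows "W (\<tau>((i, j) := 1)) = lam (i, j) / k * Wplus i"
    and "W (\<tau>((i, j) := -1)) = (\<Phi> i 1 - lam (i, j) / k) * Wplus i + Wminus i"
    and "lam (i, j) / k \<le> \<Phi> i 1"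
proof -
  have iN: "i \<in> N" using i Free_subset by auto
  have minus: "minus_allowed k \<tau> i" using Free_minus_allowed[OF i] .
  have other: "block_factor lam k (\<tau>((i, j) := x)) l = \<Phi> l" if "l \<noteq> i" for x l
    unfolding \<Phi>_def using that by (intro block_factor_upd_other) simp
  note plus = block_factor_pin_plus[OF minus j \<tau>j, of lam]
  note minus' = block_factor_pin_minus[OF minus j \<tau>j, of lam]
  show "W (\<tau>((i, j) := 1)) = lam (i, j) / k * Wplus i"
    using W_split[OF iN other] plus by simp
  show "W (\<tau>((i, j) := -1)) = (\<Phi> i 1 - lam (i, j) / k) * Wplus i + Wminus i"
    using W_split[OF iN other] minus' unfolding \<Phi>_def by simp
  show "lam (i, j) / k \<le> \<Phi> i 1"
    using minus'(1) block_factor_nonneg[of k lam i "\<tau>((i, j) := -1)" 1] lam_nonneg iN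
    unfolding \<Phi>_def by auto
qed

lemma tv_coord_eq_W:
  assumes a: "a \<in> I - \<Lambda>" and b: "b \<in> I - \<Lambda>" and ab: "a \<noteq> b"
    and t1: "W (\<tau>(a := 1)) > 0" and t2: "W (\<tau>(a := -1)) > 0"
  shows "tv_coord I (cond I \<nu> (\<lambda>\<sigma>. \<sigma> a = 1)) (cond I \<nu> (\<lambda>\<sigma>. \<sigma> a = -1)) b
       = \<bar>W (\<tau>(a := 1, b := 1)) / W (\<tau>(a := 1)) - W (\<tau>(a := -1, b := 1)) / W (\<tau>(a := -1))\<bar>"
proof -
  have bI: "b \<in> I" using b by simp
  have p1: "prob I \<nu> (\<lambda>Y. Y a = 1) \<noteq> 0" using prob_nu_upd[OF a, of 1] t1 W_tau_pos by simp
  have p2: "prob I \<nu> (\<lambda>Y. Y a = -1) \<noteq> 0" using prob_nu_upd[OF a, of "-1"] t2 W_tau_pos by simp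
  have c1: "prob I \<nu> (\<lambda>\<sigma>. \<sigma> a = 1 \<and> \<sigma> b = 1) / prob I \<nu> (\<lambda>\<sigma>. \<sigma> a = 1)
      = W (\<tau>(a := 1, b := 1)) / W (\<tau>(a := 1))"
    using prob_cond[of I \<nu> "\<lambda>\<sigma>. \<sigma> a = 1" "\<lambda>\<sigma>. \<sigma> b = 1"] prob_cond_nu_upd2[OF a _ b _ ab, of 1 1] by simp
  have c2: "prob I \<nu> (\<lambda>\<sigma>. \<sigma> a = -1 \<and> \<sigma> b = 1) / prob I \<nu> (\<lambda>\<sigma>. \<sigma> a = -1)
      = W (\<tau>(a := -1, b := 1)) / W (\<tau>(a := -1))"
    using prob_cond[of I \<nu> "\<lambda>\<sigma>. \<sigma> a = -1" "\<lambda>\<sigma>. \<sigma> b = 1"] prob_cond_nu_upd2[OF a _ b _ ab, of "-1" 1]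
    by simp
  show ?thesis unfolding tv_coord_cond[OF bI p1 p2] c1 c2 ..
qed

lemma influence_same_block_le:
  assumes i: "i \<in> Free" and j: "j \<in> {1..k}" and j': "j' \<in> {1..k}" and jj: "j \<noteq> j'"
    and \<tau>j: "\<tau> (i, j) = 0" and \<tau>j': "\<tau> (i, j') = 0"
    and t1: "W (\<tau>((i, j) := 1)) > 0" and t2: "W (\<tau>((i, j) := -1)) > 0"
  shows "\<bar>W (\<tau>((i, j) := 1, (i, j') := 1)) / W (\<tau>((i, j) := 1))
          - W (\<tau>((i, j) := -1, (i, j') := 1)) / W (\<tau>((i, j) := -1))\<bar> \<le> Bound (i, j) (i, j')"
proof -
  define la where "la = lam (i, j) / k"
  define lb where "lb = lam (i, j') / k"
  have iN: "i \<in> N" using i Free_subset by auto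
  have L: "\<Phi> i 1 > 0" using i unfolding Free_def by simp
  have la0: "la > 0" using lam[of "(i, j)"] iN j k_pos unfolding la_def by auto
  have lb0: "lb \<ge> 0" using lam[of "(i, j')"] iN j' k_pos unfolding lb_def by auto
  note W_a = W_pin_free_block[OF i j \<tau>j, folded la_def]
  have zero: "W (\<tau>((i, j) := 1, (i, j') := 1)) = 0"
    unfolding W_def by (rule factor_sum_eq_0[OF N iN]) (use block_factor_two_plus[OF j j' jj, of lam \<tau> i] in auto)
  have other: "block_factor lam k (\<tau>((i, j) := -1, (i, j') := 1)) l = \<Phi> l" if "l \<noteq> i" for l
    unfolding \<Phi>_def using that by (intro block_factor_cong) auto
  have "block_factor lam k (\<tau>((i, j) := -1, (i, j') := 1)) i 1 = lb"
    and "block_factor lam k (\<tau>((i, j) := -1, (i, j') := 1)) i (-1) = 0"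
    unfolding lb_def using block_factor_minus_plus[OF Free_minus_allowed[OF i] j j' jj \<tau>j \<tau>j', of lam]
      block_factor_two_plus(2)[OF j j' jj, of lam \<tau> i "-1"] by auto
  then have W_ab: "W (\<tau>((i, j) := -1, (i, j') := 1)) = lb * Wplus i" using W_split[OF iN other] by simp
  have "\<bar>W (\<tau>((i, j) := 1, (i, j') := 1)) / W (\<tau>((i, j) := 1))
          - W (\<tau>((i, j) := -1, (i, j') := 1)) / W (\<tau>((i, j) := -1))\<bar>
      = lb * Wplus i / ((\<Phi> i 1 - la) * Wplus i + Wminus i)"
    unfolding zero W_ab W_a(2) using lb0 W_a(3) Wplus_nonneg Wminus_nonneg by (simp add: abs_divide abs_mult)
  also have "\<dots> \<le> 10 / 9 * (lb / \<Phi> i 1 * (A i i + 1))"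
    using lam_div_k_small[of "(i, j)"] Wplus_le_Wminus[OF iN] W_a(3) t2 iN j la0
    by (intro same_block_ratio_bound[OF _ _ _ Wplus_nonneg L lb0 A_nonneg]) (auto simp: la_def W_a(2))
  also have "\<dots> = Bound (i, j) (i, j')" unfolding Bound_def \<pi>_def using jj i by (simp add: lb_def)
  finally show ?thesis .
qed

lemma W_pin_two_free_blocks:
  assumes ii: "i \<noteq> i'" and i: "i \<in> Free" and i': "i' \<in> Free" and j: "j \<in> {1..k}" and j': "j' \<in> {1..k}"
    and \<tau>j: "\<tau> (i, j) = 0" and \<tau>j': "\<tau> (i', j') = 0"
  shows "W (\<tau>((i, j) := 1, (i', j') := 1)) = lam (i, j) / k * (lam (i', j') / k) * Q i i' (delta 1) (delta 1)"
    and "W (\<tau>((i, j) := -1, (i', j') := 1)) = lam (i', j') / k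
           * ((\<Phi> i 1 - lam (i, j) / k) * Q i i' (delta 1) (delta 1) + Q i i' (delta (-1)) (delta 1))"
proof -
  have iN: "i \<in> N" and i'N: "i' \<in> N" using i i' Free_subset by auto
  have minus: "minus_allowed k \<tau> i" and minus': "minus_allowed k \<tau> i'" using Free_minus_allowed i i' by auto
  have W_ab: "W (\<tau>((i, j) := x, (i', j') := y))
      = Q i i' (block_factor lam k (\<tau>((i, j) := x)) i) (block_factor lam k (\<tau>((i', j') := y)) i')" for x y
  proof -
    have "block_factor lam k (\<tau>((i, j) := x, (i', j') := y)) l = \<Phi> l" if "l \<noteq> i" "l \<noteq> i'" for l
      unfolding \<Phi>_def using that by (intro block_factor_cong) auto
    moreover have "block_factor lam k (\<tau>((i, j) := x, (i', j') := y)) i = block_factor lam k (\<tau>((i, j) := x)) i"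
      using ii by (intro block_factor_upd_other) simp
    moreover have "block_factor lam k (\<tau>((i, j) := x, (i', j') := y)) i'
        = block_factor lam k (\<tau>((i', j') := y)) i'"
      using ii by (metis block_factor_upd_other fun_upd_twist fst_conv prod.inject)
    ultimately show ?thesis using W_eq_Q[OF ii] by metis
  qed
  note plus = block_factor_pin_plus[OF minus j \<tau>j, of lam]
    and minus_i = block_factor_pin_minus[OF minus j \<tau>j, of lam]
  note plus' = block_factor_pin_plus[OF minus' j' \<tau>j', of lam]
  have Q_b: "Q i i' f (block_factor lam k (\<tau>((i', j') := 1)) i') = lam (i', j') / k * Q i i' f (delta 1)" for f
    using Q_split_snd[OF ii i'N, of f "block_factor lam k (\<tau>((i', j') := 1)) i'"] plus' by simp
  show "W (\<tau>((i, j) := 1, (i', j') := 1)) = lam (i, j) / k * (lam (i', j') / k) * Q i i' (delta 1) (delta 1)"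
    unfolding W_ab Q_b using Q_split_fst[OF ii iN, of "block_factor lam k (\<tau>((i, j) := 1)) i" "delta 1"] plus
    by simp
  show "W (\<tau>((i, j) := -1, (i', j') := 1)) = lam (i', j') / k
      * ((\<Phi> i 1 - lam (i, j) / k) * Q i i' (delta 1) (delta 1) + Q i i' (delta (-1)) (delta 1))"
    unfolding W_ab Q_b using Q_split_fst[OF ii iN, of "block_factor lam k (\<tau>((i, j) := -1)) i" "delta 1"]
        minus_i
    unfolding \<Phi>_def by simp
qed

lemma A_eq:
  assumes ii: "i \<noteq> i'" and i: "i \<in> Free" and i': "i' \<in> Free" and pos: "Wplus i > 0"
  shows "A i i' = \<bar>\<Phi> i 1 * \<Phi> i' 1 * Q i i' (delta 1) (delta 1) / (\<Phi> i 1 * Wplus i)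
      - \<Phi> i' 1 * (\<Phi> i 1 * Q i i' (delta 1) (delta 1) + Q i i' (delta (-1)) (delta 1))
        / (\<Phi> i 1 * Wplus i + Wminus i)\<bar>"
proof -
  have iN: "i \<in> N" and i'N: "i' \<in> N" using i i' Free_subset by auto
  have minus: "\<Phi> i (-1) = 1" "\<Phi> i' (-1) = 1" using Phi_Free_minus i i' by auto
  have split: "Q i i' f g
      = f 1 * g 1 * Q i i' (delta 1) (delta 1) + f 1 * g (-1) * Q i i' (delta 1) (delta (-1))
      + f (-1) * g 1 * Q i i' (delta (-1)) (delta 1) + f (-1) * g (-1) * Q i i' (delta (-1)) (delta (-1))"
    for f g
    using Q_split_fst[OF ii iN, of f g] Q_split_snd[OF ii i'N, of "delta 1" g]
        Q_split_snd[OF ii i'N, of "delta (-1)" g]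
    by (simp add: algebra_simps)
  have W_\<tau>: "W \<tau> = \<Phi> i 1 * Wplus i + Wminus i"
    using W_split[OF iN, of \<tau>] minus unfolding \<Phi>_def by simp
  have E2: "Q i i' (\<lambda>z. allows 1 z * \<Phi> i z) (\<Phi> i') = \<Phi> i 1 * Wplus i"
    using Q_split_fst[OF ii iN, of "\<lambda>z. allows 1 z * \<Phi> i z" "\<Phi> i'"] Q_Wplus[OF ii] by (simp add: allows_def)
  have "0 < Q i i' (\<lambda>z. allows 1 z * \<Phi> i z) (\<Phi> i')"
    unfolding E2 using i pos unfolding Free_def by simp
  moreover have "Q i i' (\<lambda>z. allows 1 z * \<Phi> i z) (\<lambda>z. allows 1 z * \<Phi> i' z)
      = \<Phi> i 1 * \<Phi> i' 1 * Q i i' (delta 1) (delta 1)"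
    using split[of "\<lambda>z. allows 1 z * \<Phi> i z" "\<lambda>z. allows 1 z * \<Phi> i' z"] by (simp add: allows_def)
  moreover have "Q i i' (\<Phi> i) (\<lambda>z. allows 1 z * \<Phi> i' z)
      = \<Phi> i' 1 * (\<Phi> i 1 * Q i i' (delta 1) (delta 1) + Q i i' (delta (-1)) (delta 1))"
    using split[of "\<Phi> i" "\<lambda>z. allows 1 z * \<Phi> i' z"] minus by (simp add: allows_def algebra_simps)
  ultimately show ?thesis using PsiAbsCor_eq[OF ii i i'] unfolding A_def E2 W_\<tau> by simp
qed

lemma influence_cross_block_le:
  assumes ii: "i \<noteq> i'" and i: "i \<in> Free" and i': "i' \<in> Free" and j: "j \<in> {1..k}" and j': "j' \<in> {1..k}"
    and \<tau>j: "\<tau> (i, j) = 0" and \<tau>j': "\<tau> (i', j') = 0" and t1: "W (\<tau>((i, j) := 1)) > 0"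
  shows "\<bar>W (\<tau>((i, j) := 1, (i', j') := 1)) / W (\<tau>((i, j) := 1))
          - W (\<tau>((i, j) := -1, (i', j') := 1)) / W (\<tau>((i, j) := -1))\<bar> \<le> Bound (i, j) (i', j')"
proof -
  define la where "la = lam (i, j) / k"
  define lb where "lb = lam (i', j') / k"
  have iN: "i \<in> N" using i Free_subset by auto
  have L: "\<Phi> i 1 > 0" "\<Phi> i' 1 > 0" using i i' unfolding Free_def by auto
  have la0: "la > 0" using lam[of "(i, j)"] iN j k_pos unfolding la_def by auto
  have lb0: "lb \<ge> 0" using lam[of "(i', j')"] i' Free_subset j' k_pos unfolding lb_def by auto
  note W_a = W_pin_free_block[OF i j \<tau>j, folded la_def]
  note W_ab = W_pin_two_free_blocks[OF ii i i' j j' \<tau>j \<tau>j', folded la_def lb_def]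
  have pos: "Wplus i > 0" using t1 W_a(1) la0 by (simp add: zero_less_mult_iff)
  have "\<bar>W (\<tau>((i, j) := 1, (i', j') := 1)) / W (\<tau>((i, j) := 1))
          - W (\<tau>((i, j) := -1, (i', j') := 1)) / W (\<tau>((i, j) := -1))\<bar>
      \<le> 10 / 9 * (lb / \<Phi> i' 1 * A i i')"
    unfolding W_ab W_a(1,2) A_eq[OF ii i i' pos]
    using lam_div_k_small[of "(i, j)"] Wplus_le_Wminus[OF iN] iN j W_a(3) la0
    by (intro cross_block_ratio_bound[OF _ _ pos L(1) L(2) _ _ lb0]) (auto simp: la_def mult.assoc)
  also have "\<dots> = Bound (i, j) (i', j')" unfolding Bound_def \<pi>_def using ii i i' by (simp add: lb_def)
  finally show ?thesis .
qed

lemma Psi_off_diag_le: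
  assumes a: "a \<in> I - \<Lambda>" and b: "b \<in> I - \<Lambda>" and ab: "a \<noteq> b"
  shows "Psi I \<nu> a b \<le> Bound a b"
proof (rule Psi_leI[OF supp1_nu_nonempty Bound_nonneg])
  show "a \<in> I" "b \<in> I" using a b by auto
  assume "1 \<in> supp1 I \<nu> a" and "-1 \<in> supp1 I \<nu> a"
  then have t1: "W (\<tau>(a := 1)) > 0" and t2: "W (\<tau>(a := -1)) > 0"
    using mem_supp1_nu_iff[OF a] by auto
  obtain i j where ij: "a = (i, j)" "i \<in> N" "j \<in> {1..k}" "\<tau> (i, j) = 0" using free_coordE[OF a] .
  obtain i' j' where ij': "b = (i', j')" "i' \<in> N" "j' \<in> {1..k}" "\<tau> (i', j') = 0" using free_coordE[OF b] .
  have i: "i \<in> Free" using W_dead[OF a] t1 ij by auto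
  have "\<bar>W (\<tau>(a := 1, b := 1)) / W (\<tau>(a := 1)) - W (\<tau>(a := -1, b := 1)) / W (\<tau>(a := -1))\<bar>
      \<le> Bound a b"
  proof (cases "i' \<in> Free")
    case False
    then have "W (\<tau>(a := 1, b := 1)) = 0" "W (\<tau>(a := -1, b := 1)) = 0" using W_dead2[OF a b ab] ij' by auto
    then show ?thesis using Bound_nonneg[of b a] b by simp
  next
    case True
    show ?thesis
    proof (cases "i' = i")
      case True
      then show ?thesis using influence_same_block_le[OF i ij(3) ij'(3) _ ij(4)] ij ij' ab t1 t2 by auto
    next
      case False
      then show ?thesis using influence_cross_block_le[OF _ i \<open>i' \<in> Free\<close> ij(3) ij'(3) ij(4) ij'(4)] ij ij' t1
        by auto
    qed
  qed
  then show "tv_coord I (cond I \<nu> (\<lambda>\<sigma>. \<sigma> a = 1)) (cond I \<nu> (\<lambda>\<sigma>. \<sigma> a = -1)) b \<le> Bound a b"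
    unfolding tv_coord_eq_W[OF a b ab t1 t2] .
qed

lemma abs_Psi_le_Bound: "a \<in> I - \<Lambda> \<Longrightarrow> b \<in> I - \<Lambda> \<Longrightarrow> \<bar>Psi I \<nu> a b\<bar> \<le> Bound a b"
proof -
  assume a: "a \<in> I - \<Lambda>" and b: "b \<in> I - \<Lambda>"
  have nn: "Psi I \<nu> a b \<ge> 0" by (rule Psi_nonneg[OF supp1_nu_nonempty]) (use a in simp)
  have "Psi I \<nu> a b \<le> Bound a b"
  proof (cases "a = b")
    case True
    have "Bound a a \<ge> 1"
      unfolding Bound_def using \<pi>_nonneg[of a] A_nonneg a by (auto intro!: mult_nonneg_nonneg add_nonneg_nonneg)
    then show ?thesis using Psi_diag_le[OF a] True by simp
  next
    case False then show ?thesis using Psi_off_diag_le[OF a b] by simp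
  qed
  then show ?thesis using nn by simp
qed

lemma finite_Free: "finite Free" using N Free_subset finite_subset by blast

lemma free_block_eq:
  assumes i: "i \<in> Free"
  shows "{b \<in> I - \<Lambda>. fst b = i} = (\<lambda>j. (i, j)) ` {j\<in>{1..k}. \<tau> (i, j) = 0}"
proof -
  have iN: "i \<in> N" using i Free_subset by auto
  have inL: "(i,j) \<in> \<Lambda> \<Longrightarrow> \<tau> (i,j) \<noteq> 0" for j using cube_value[OF tau_in_cube, of "(i,j)"] by auto
  show ?thesis
  proof (rule equalityI; rule subsetI)
    fix b assume "b \<in> {b \<in> I - \<Lambda>. fst b = i}"
    then show "b \<in> (\<lambda>j. (i, j)) ` {j\<in>{1..k}. \<tau> (i, j) = 0}" using tau_outside by (cases b) auto
  next
    fix b assume "b \<in> (\<lambda>j. (i, j)) ` {j\<in>{1..k}. \<tau> (i, j) = 0}"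
    then show "b \<in> {b \<in> I - \<Lambda>. fst b = i}" using iN inL by auto
  qed
qed

lemma sum_\<pi>_block:
  assumes i: "i \<in> Free"
  shows "(\<Sum>b\<in>{b \<in> I - \<Lambda>. fst b = i}. \<pi> b) = 1"
proof -
  have minus: "minus_allowed k \<tau> i" using Free_minus_allowed[OF i] .
  have g: "plus_allowed k \<tau> i j \<longleftrightarrow> \<tau> (i,j) = 0" if j: "j \<in> {1..k}" for j
  proof
    assume "plus_allowed k \<tau> i j"
    then have "\<tau> (i,j) \<noteq> 0 \<longrightarrow> \<tau> (i,j) = 1" using j unfolding plus_allowed_def by auto
    moreover have "\<tau> (i,j) \<noteq> 0 \<longrightarrow> \<tau> (i,j) = -1" using minus j unfolding minus_allowed_def by auto
    ultimately show "\<tau> (i,j) = 0" by auto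
  next
    assume "\<tau> (i,j) = 0"
    then show "plus_allowed k \<tau> i j" using minus unfolding plus_allowed_def minus_allowed_def by auto
  qed
  have L: "\<Phi> i 1 = (\<Sum>j\<in>{j\<in>{1..k}. \<tau> (i, j) = 0}. lam (i,j) / real k)"
  proof -
    have "\<Phi> i 1 = (\<Sum>j\<in>{1..k}. lam (i,j) / real k * (if plus_allowed k \<tau> i j then 1 else 0))"
      by (simp add: \<Phi>_def block_factor_def)
    also have "\<dots> = (\<Sum>j\<in>{1..k}. if \<tau> (i, j) = 0 then lam (i,j) / real k else 0)"
      by (rule sum.cong) (auto simp: g)
    also have "\<dots> = (\<Sum>j\<in>{j\<in>{1..k}. \<tau> (i, j) = 0}. lam (i,j) / real k)"
      by (rule sum.inter_filter[symmetric]) simp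
    finally show ?thesis .
  qed
  have Lpos: "\<Phi> i 1 > 0" using i by (simp add: Free_def)
  have "(\<Sum>b\<in>{b \<in> I - \<Lambda>. fst b = i}. \<pi> b) = (\<Sum>j\<in>{j\<in>{1..k}. \<tau> (i, j) = 0}. \<pi> (i,j))"
    unfolding free_block_eq[OF i] by (subst sum.reindex) (auto intro: inj_onI simp: o_def)
  also have "\<dots> = (\<Sum>j\<in>{j\<in>{1..k}. \<tau> (i, j) = 0}. lam (i,j) / real k) / \<Phi> i 1"
    unfolding \<pi>_def by (simp add: sum_divide_distrib)
  also have "\<dots> = 1" using L Lpos by simp
  finally show ?thesis .
qed

lemma \<pi>_pos: "b \<in> I \<Longrightarrow> fst b \<in> Free \<Longrightarrow> \<pi> b > 0"
  unfolding \<pi>_def using lam[of b] k_pos by (auto simp: Free_def)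

lemma spec_radius_Psi_le: "spec_radius (I - \<Lambda>) (Psi I \<nu>) \<le> 2 * \<eta> + 3"
proof -
  have "spec_radius (I - \<Lambda>) (Psi I \<nu>) \<le> 1 + 10/9 * spec_radius Free (\<lambda>i i'. A i i' + of_bool (i = i'))"
  proof (rule spec_radius_le_block_dominated[where blk = fst and \<pi> = \<pi>])
    fix a b assume "a \<in> I - \<Lambda>" "b \<in> I - \<Lambda>"
    then show "\<bar>Psi I \<nu> a b\<bar> \<le> of_bool (a = b) + 10/9 * (if fst a \<in> Free \<and> fst b \<in> Free
        then \<pi> b * (A (fst a) (fst b) + of_bool (fst a = fst b)) else 0)"
      using abs_Psi_le_Bound unfolding Bound_def by blast
  qed (use finite_I finite_Free A_nonneg \<pi>_nonneg \<pi>_pos sum_\<pi>_block in auto)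
  moreover have "spec_radius Free (\<lambda>i i'. A i i' + of_bool (i = i')) \<le> \<eta> + 1"
    using spec_radius_add_id_le[OF finite_Free, of A] spec_radius_PsiAbsCor_le unfolding A_def by simp
  ultimately show ?thesis using eta_pos by linarith
qed

end

theorem lemma6p7:
  fixes n k :: nat and \<eta> \<epsilon> :: real and \<mu> :: "(nat \<Rightarrow> int) \<Rightarrow> real"
  assumes "\<eta> > 0" and "\<epsilon> > 0"
    and "is_dist {1..n} \<mu>"
    and "mu_min_neg {1..n} \<mu> > 0"
    and "complete_limited_correlation {1..n} \<eta> \<epsilon> \<mu>"
    and "real k \<ge> 10 * (1 + \<epsilon>) / mu_min_neg {1..n} \<mu>"
  shows "completely_SI ({1..n} \<times> {1..k}) (2 * \<eta> + 3) \<epsilon> (Rd {1..n} \<mu> k)"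
  unfolding completely_SI_def spectrally_independent_def
proof (intro allI impI ballI)
  fix lam :: "nat \<times> nat \<Rightarrow> real" and \<Lambda> and \<tau>
  assume "\<forall>i\<in>{1..n} \<times> {1..k}. 0 < lam i \<and> lam i \<le> 1 + \<epsilon>"
    and "\<Lambda> \<subseteq> {1..n} \<times> {1..k}"
    and "\<tau> \<in> supp_marg ({1..n} \<times> {1..k}) (tilt ({1..n} \<times> {1..k}) lam (Rd {1..n} \<mu> k)) \<Lambda>"
  then interpret Rd_pinning "{1..n}" \<mu> k lam \<epsilon> \<eta> \<Lambda> \<tau>
    using assms by unfold_locales auto
  show "spec_radius ({1..n} \<times> {1..k} - \<Lambda>)
          (Psi ({1..n} \<times> {1..k}) (pin ({1..n} \<times> {1..k}) (tilt ({1..n} \<times> {1..k}) lam (Rd {1..n} \<mu> k)) \<Lambda> \<tau>))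
        \<le> 2 * \<eta> + 3"
    using spec_radius_Psi_le unfolding \<nu>_def .
qed

end
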